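(* Let $1\le p<\infty$, let $d_{w,p}$ be a Lorentz sequence space, and let $X$ and $Y$ be closed subspaces of $d_{w,p}$. Then $\mathcal{FSS}(X,Y)=\mathcal{SS}(X,Y)$. In particular, $\mathcal{FSS}(\ell_p,d_{w,p})=\mathcal{SS}(\ell_p,d_{w,p})$ and $\mathcal{FSS}(d_{w,p})=\mathcal{SS}(d_{w,p})$.
   Context: Let $1\le p<\infty$ and let $w=(w_n)$ be a real sequence with $w_1=1$, $w_n\downarrow 0$ and $\sum_n w_n=\infty$. The Lorentz sequence space $d_{w,p}$ is the Banach space of all $x=(x_n)\in c_0$ with $\|x\|_{d_{w,p}}=\big(\sum_{n}w_n (x^*_n)^p\big)^{1/p}<\infty$, where $(x^*_n)$ is the non-increasing rearrangement of $(|x_n|)$. $\mathcal{SS}(X,Y)$ is the set of strictly singular operators $T\in L(X,Y)$: no restriction of $T$ to an infinite-dimensional closed subspace is an isomorphism. $\mathcal{FSS}(X,Y)$ is the set of finitely strictly singular operators: $T\in L(X,Y)$ such that for every $\varepsilon>0$ there is $N\in\mathbb N$ such that every subspace $Z\subseteq X$ with $\dim Z\ge N$ contains $z$ with $\|Tz\|<\varepsilon\|z\|$. *)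

theory Defs
  imports "HOL-Analysis.Analysis"
begin

text \<open>Sequences are functions nat => real, indexed from 0 (the paper's index n corresponds to n-1).\<close>

definition decr_rearr :: "(nat \<Rightarrow> real) \<Rightarrow> nat \<Rightarrow> real" where
  "decr_rearr x n = Inf {t. 0 \<le> t \<and> finite {k. \<bar>x k\<bar> > t} \<and> card {k. \<bar>x k\<bar> > t} \<le> n}"

definition lorentz_weight :: "(nat \<Rightarrow> real) \<Rightarrow> bool" where
  "lorentz_weight w \<longleftrightarrow> w 0 = 1 \<and> decseq w \<and> w \<longlonglongrightarrow> 0 \<and> \<not> summable w"

definition lorentz_space :: "(nat \<Rightarrow> real) \<Rightarrow> real \<Rightarrow> (nat \<Rightarrow> real) set" where
  "lorentz_space w p = {x. x \<longlonglongrightarrow> 0 \<and> summable (\<lambda>n. w n * decr_rearr x n powr p)}"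

definition lorentz_norm :: "(nat \<Rightarrow> real) \<Rightarrow> real \<Rightarrow> (nat \<Rightarrow> real) \<Rightarrow> real" where
  "lorentz_norm w p x = (\<Sum>n. w n * decr_rearr x n powr p) powr (1 / p)"

definition lp_space :: "real \<Rightarrow> (nat \<Rightarrow> real) set" where
  "lp_space p = {x. summable (\<lambda>n. \<bar>x n\<bar> powr p)}"

definition lp_norm :: "real \<Rightarrow> (nat \<Rightarrow> real) \<Rightarrow> real" where
  "lp_norm p x = (\<Sum>n. \<bar>x n\<bar> powr p) powr (1 / p)"

definition lin_subspace :: "(nat \<Rightarrow> real) set \<Rightarrow> bool" where
  "lin_subspace Z \<longleftrightarrow> (\<lambda>k. 0) \<in> Z \<and> (\<forall>x\<in>Z. \<forall>y\<in>Z. (\<lambda>k. x k + y k) \<in> Z)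
     \<and> (\<forall>c. \<forall>x\<in>Z. (\<lambda>k. c * x k) \<in> Z)"

definition norm_closed :: "((nat \<Rightarrow> real) \<Rightarrow> real) \<Rightarrow> (nat \<Rightarrow> real) set \<Rightarrow> (nat \<Rightarrow> real) set \<Rightarrow> bool" where
  "norm_closed N S Z \<longleftrightarrow> (\<forall>xs x. (\<forall>n. xs n \<in> Z) \<longrightarrow> x \<in> S \<longrightarrow>
      (\<lambda>n. N (\<lambda>k. xs n k - x k)) \<longlonglongrightarrow> 0 \<longrightarrow> x \<in> Z)"

definition closed_subspace_of :: "((nat \<Rightarrow> real) \<Rightarrow> real) \<Rightarrow> (nat \<Rightarrow> real) set \<Rightarrow> (nat \<Rightarrow> real) set \<Rightarrow> bool" where
  "closed_subspace_of N S Z \<longleftrightarrow> Z \<subseteq> S \<and> lin_subspace Z \<and> norm_closed N S Z"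

definition dim_at_least :: "(nat \<Rightarrow> real) set \<Rightarrow> nat \<Rightarrow> bool" where
  "dim_at_least Z n \<longleftrightarrow> (\<exists>f :: nat \<Rightarrow> nat \<Rightarrow> real. (\<forall>i<n. f i \<in> Z) \<and>
     (\<forall>c :: nat \<Rightarrow> real. (\<forall>k. (\<Sum>i<n. c i * f i k) = 0) \<longrightarrow> (\<forall>i<n. c i = 0)))"

definition infinite_dimensional :: "(nat \<Rightarrow> real) set \<Rightarrow> bool" where
  "infinite_dimensional Z \<longleftrightarrow> (\<forall>n. dim_at_least Z n)"

definition bounded_ops ::
  "((nat \<Rightarrow> real) \<Rightarrow> real) \<Rightarrow> ((nat \<Rightarrow> real) \<Rightarrow> real) \<Rightarrow> (nat \<Rightarrow> real) set \<Rightarrow> (nat \<Rightarrow> real) set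
    \<Rightarrow> ((nat \<Rightarrow> real) \<Rightarrow> (nat \<Rightarrow> real)) set" where
  "bounded_ops NX NY X Y = {T. (\<forall>x\<in>X. T x \<in> Y)
     \<and> (\<forall>x\<in>X. \<forall>y\<in>X. T (\<lambda>k. x k + y k) = (\<lambda>k. T x k + T y k))
     \<and> (\<forall>c. \<forall>x\<in>X. T (\<lambda>k. c * x k) = (\<lambda>k. c * T x k))
     \<and> (\<exists>C. \<forall>x\<in>X. NY (T x) \<le> C * NX x)}"

definition SS_ops ::
  "((nat \<Rightarrow> real) \<Rightarrow> real) \<Rightarrow> ((nat \<Rightarrow> real) \<Rightarrow> real) \<Rightarrow> (nat \<Rightarrow> real) set \<Rightarrow> (nat \<Rightarrow> real) set
    \<Rightarrow> ((nat \<Rightarrow> real) \<Rightarrow> (nat \<Rightarrow> real)) set" where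
  "SS_ops NX NY X Y = {T \<in> bounded_ops NX NY X Y.
     \<not> (\<exists>Z. closed_subspace_of NX X Z \<and> infinite_dimensional Z \<and>
            (\<exists>c>0. \<forall>z\<in>Z. c * NX z \<le> NY (T z)))}"

definition FSS_ops ::
  "((nat \<Rightarrow> real) \<Rightarrow> real) \<Rightarrow> ((nat \<Rightarrow> real) \<Rightarrow> real) \<Rightarrow> (nat \<Rightarrow> real) set \<Rightarrow> (nat \<Rightarrow> real) set
    \<Rightarrow> ((nat \<Rightarrow> real) \<Rightarrow> (nat \<Rightarrow> real)) set" where
  "FSS_ops NX NY X Y = {T \<in> bounded_ops NX NY X Y.
     \<forall>\<epsilon>>0. \<exists>N. \<forall>Z. Z \<subseteq> X \<and> lin_subspace Z \<and> dim_at_least Z N \<longrightarrow>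
        (\<exists>z\<in>Z. NY (T z) < \<epsilon> * NX z)}"

end

theory Submission
  imports Defs
begin

text \<open>
  Suppose T is strictly singular but not finitely strictly singular. Then for some e > 0 there are
  subspaces of every finite dimension on which |Tz| >= e |z|. Linear algebra in such a subspace
  produces normalized vectors z that vanish, together with Tz, on any prescribed initial segment
  of coordinates, and for which Tz has r coordinates of equal maximal modulus; since the weights
  are not summable, taking r large forces every coordinate of Tz to be uniformly small. Cutting
  off tails, a gliding hump of such vectors gives disjointly supported blocks. In the domain, both
  l_p and d_{w,p} satisfy an upper p-estimate for disjoint vectors; in d_{w,p}, a vector with
  uniformly small coordinates placed after m others loses almost nothing when its weights are
  shifted by m, which yields a lower p-estimate for the image blocks. Hence T is bounded below on
  the closed span of the humps, contradicting strict singularity.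

  Everything is phrased with the p-th powers Phi = |.|^p of the norms, which are only
  quasi-additive, Phi (x + y) <= 2^(p+1) (Phi x + Phi y); this avoids proving the triangle
  inequality in d_{w,p}.
\<close>

section \<open>The decreasing rearrangement\<close>

definition rearr_thresholds :: "(nat \<Rightarrow> real) \<Rightarrow> nat \<Rightarrow> real set" where
  "rearr_thresholds x n = {t. 0 \<le> t \<and> finite {k. \<bar>x k\<bar> > t} \<and> card {k. \<bar>x k\<bar> > t} \<le> n}"

lemma decr_rearr_eq_Inf: "decr_rearr x n = Inf (rearr_thresholds x n)"
  unfolding decr_rearr_def rearr_thresholds_def by simp

lemma bdd_below_rearr_thresholds: "bdd_below (rearr_thresholds x n)"
  unfolding rearr_thresholds_def by (auto intro: bdd_belowI[where m=0])

lemma null_seq_abs_bounded: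
  fixes x :: "nat \<Rightarrow> real"
  assumes "x \<longlonglongrightarrow> 0"
  shows "\<exists>B\<ge>0. \<forall>k. \<bar>x k\<bar> \<le> B"
proof -
  have "Bseq x" using assms by (intro convergent_imp_Bseq) (auto simp: convergent_def)
  then obtain B where "B > 0" "\<forall>k. norm (x k) \<le> B" by (auto simp: Bseq_def)
  thus ?thesis by (intro exI[of _ B]) auto
qed

lemma null_seq_finite_abs_gt:
  fixes x :: "nat \<Rightarrow> real"
  assumes "x \<longlonglongrightarrow> 0" "t > 0"
  shows "finite {k. \<bar>x k\<bar> > t}"
proof -
  obtain N where N: "\<forall>k\<ge>N. \<bar>x k\<bar> < t" using LIMSEQ_D[OF assms] by auto
  have "{k. \<bar>x k\<bar> > t} \<subseteq> {..<N}" using N by (auto simp: not_less[symmetric])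
  thus ?thesis by (rule finite_subset) simp
qed

lemma null_seq_finite_abs_ge:
  fixes x :: "nat \<Rightarrow> real"
  assumes "x \<longlonglongrightarrow> 0" "t > 0"
  shows "finite {k. t \<le> \<bar>x k\<bar>}"
proof -
  have "{k. t \<le> \<bar>x k\<bar>} \<subseteq> {k. \<bar>x k\<bar> > t/2}" using assms(2) by auto
  thus ?thesis
    by (rule finite_subset) (rule null_seq_finite_abs_gt[OF assms(1)], use assms(2) in simp)
qed

lemma finite_support_imp_null:
  fixes x :: "nat \<Rightarrow> real"
  assumes "finite S" "\<And>k. k \<notin> S \<Longrightarrow> x k = 0"
  shows "x \<longlonglongrightarrow> 0"
proof -
  obtain N where "\<forall>k\<in>S. k < N" using assms(1) by (metis finite_nat_bounded lessThan_iff subset_eq)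
  hence "\<forall>k\<ge>N. x k = 0" using assms(2) by (meson not_le)
  thus ?thesis by (intro LIMSEQ_I) (auto intro!: exI[of _ N])
qed

lemma rearr_thresholds_nonempty:
  assumes "x \<longlonglongrightarrow> 0"
  shows "rearr_thresholds x n \<noteq> {}"
proof -
  obtain B where B: "B \<ge> 0" "\<forall>k. \<bar>x k\<bar> \<le> B" using null_seq_abs_bounded[OF assms] by blast
  have "{k. \<bar>x k\<bar> > B} = {}" using B by (auto simp: not_less)
  hence "B \<in> rearr_thresholds x n" using B unfolding rearr_thresholds_def by simp
  thus ?thesis by blast
qed

lemma decr_rearr_le: "t \<in> rearr_thresholds x n \<Longrightarrow> decr_rearr x n \<le> t"
  unfolding decr_rearr_eq_Inf by (rule cInf_lower[OF _ bdd_below_rearr_thresholds])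

lemma decr_rearr_le_bound: "0 \<le> t \<Longrightarrow> (\<And>k. \<bar>x k\<bar> \<le> t) \<Longrightarrow> decr_rearr x n \<le> t"
  by (rule decr_rearr_le) (auto simp: rearr_thresholds_def not_less[symmetric])

lemma decr_rearr_ge:
  "x \<longlonglongrightarrow> 0 \<Longrightarrow> (\<And>t. t \<in> rearr_thresholds x n \<Longrightarrow> s \<le> t) \<Longrightarrow> s \<le> decr_rearr x n"
  unfolding decr_rearr_eq_Inf by (rule cInf_greatest[OF rearr_thresholds_nonempty])

lemma decr_rearr_nonneg: "x \<longlonglongrightarrow> 0 \<Longrightarrow> 0 \<le> decr_rearr x n"
  by (rule decr_rearr_ge) (auto simp: rearr_thresholds_def)

lemma decr_rearr_mono:
  assumes "x \<longlonglongrightarrow> 0" "\<And>k. \<bar>y k\<bar> \<le> \<bar>x k\<bar>"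
  shows "decr_rearr y n \<le> decr_rearr x n"
proof (rule decr_rearr_ge[OF assms(1)])
  fix t assume t: "t \<in> rearr_thresholds x n"
  have sub: "{k. \<bar>y k\<bar> > t} \<subseteq> {k. \<bar>x k\<bar> > t}" using assms(2) by (auto intro: order.strict_trans2)
  have fx: "finite {k. \<bar>x k\<bar> > t}" "card {k. \<bar>x k\<bar> > t} \<le> n" "0 \<le> t"
    using t unfolding rearr_thresholds_def by auto
  hence "t \<in> rearr_thresholds y n"
    using finite_subset[OF sub] card_mono[OF fx(1) sub] unfolding rearr_thresholds_def by auto
  thus "decr_rearr y n \<le> t" by (rule decr_rearr_le)
qed

lemma decr_rearr_antimono:
  assumes "x \<longlonglongrightarrow> 0" "m \<le> n"
  shows "decr_rearr x n \<le> decr_rearr x m"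
proof (rule decr_rearr_ge[OF assms(1)])
  fix t assume "t \<in> rearr_thresholds x m"
  hence "t \<in> rearr_thresholds x n" using assms(2) unfolding rearr_thresholds_def by auto
  thus "decr_rearr x n \<le> t" by (rule decr_rearr_le)
qed

lemma decr_rearr_zero: "decr_rearr (\<lambda>k. 0) n = 0"
proof -
  have "0 \<in> rearr_thresholds (\<lambda>k. 0) n" unfolding rearr_thresholds_def by simp
  hence "decr_rearr (\<lambda>k. 0) n \<le> 0" by (rule decr_rearr_le)
  moreover have "0 \<le> decr_rearr (\<lambda>k. 0) n" by (rule decr_rearr_nonneg) simp
  ultimately show ?thesis by simp
qed

lemma decr_rearr_scale_le:
  assumes "x \<longlonglongrightarrow> 0" "c \<noteq> 0"
  shows "decr_rearr (\<lambda>k. c * x k) n \<le> \<bar>c\<bar> * decr_rearr x n"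
proof -
  have "decr_rearr (\<lambda>k. c * x k) n / \<bar>c\<bar> \<le> decr_rearr x n"
  proof (rule decr_rearr_ge[OF assms(1)])
    fix t assume t: "t \<in> rearr_thresholds x n"
    have "{k. \<bar>c * x k\<bar> > \<bar>c\<bar> * t} = {k. \<bar>x k\<bar> > t}"
      using assms(2) by (auto simp: abs_mult)
    hence "\<bar>c\<bar> * t \<in> rearr_thresholds (\<lambda>k. c * x k) n" using t unfolding rearr_thresholds_def
      by auto
    hence "decr_rearr (\<lambda>k. c * x k) n \<le> \<bar>c\<bar> * t" by (rule decr_rearr_le)
    thus "decr_rearr (\<lambda>k. c * x k) n / \<bar>c\<bar> \<le> t" using assms(2)
      by (simp add: divide_le_eq mult.commute)
  qed
  thus ?thesis using assms(2) by (simp add: divide_le_eq mult.commute)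
qed

lemma decr_rearr_scale:
  assumes "x \<longlonglongrightarrow> 0"
  shows "decr_rearr (\<lambda>k. c * x k) n = \<bar>c\<bar> * decr_rearr x n"
proof (cases "c = 0")
  case True thus ?thesis using decr_rearr_zero by simp
next
  case False
  have cx: "(\<lambda>k. c * x k) \<longlonglongrightarrow> 0" using tendsto_mult_right_zero[OF assms] by simp
  have "decr_rearr x n = decr_rearr (\<lambda>k. (1/c) * (c * x k)) n" using False by simp
  also have "\<dots> \<le> \<bar>1/c\<bar> * decr_rearr (\<lambda>k. c * x k) n"
    by (rule decr_rearr_scale_le[OF cx]) (use False in simp)
  finally have "\<bar>c\<bar> * decr_rearr x n \<le> decr_rearr (\<lambda>k. c * x k) n"
    using False by (simp add: field_simps)
  with decr_rearr_scale_le[OF assms False, of n] show ?thesis by linarith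
qed

lemma decr_rearr_add_le:
  assumes x: "x \<longlonglongrightarrow> 0" and y: "y \<longlonglongrightarrow> 0"
  shows "decr_rearr (\<lambda>k. x k + y k) (m + n) \<le> decr_rearr x m + decr_rearr y n"
proof -
  have sum_threshold: "t1 + t2 \<in> rearr_thresholds (\<lambda>k. x k + y k) (m + n)"
    if t1: "t1 \<in> rearr_thresholds x m" and t2: "t2 \<in> rearr_thresholds y n" for t1 t2
  proof -
    have sub: "{k. \<bar>x k + y k\<bar> > t1 + t2} \<subseteq> {k. \<bar>x k\<bar> > t1} \<union> {k. \<bar>y k\<bar> > t2}" by force
    have f: "finite ({k. \<bar>x k\<bar> > t1} \<union> {k. \<bar>y k\<bar> > t2})"
      using t1 t2 unfolding rearr_thresholds_def by auto
    have "card {k. \<bar>x k + y k\<bar> > t1 + t2} \<le> card ({k. \<bar>x k\<bar> > t1} \<union> {k. \<bar>y k\<bar> > t2})"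
      by (rule card_mono[OF f sub])
    also have "\<dots> \<le> card {k. \<bar>x k\<bar> > t1} + card {k. \<bar>y k\<bar> > t2}" by (rule card_Un_le)
    also have "\<dots> \<le> m + n" using t1 t2 unfolding rearr_thresholds_def by auto
    finally show ?thesis
      using t1 t2 finite_subset[OF sub f] unfolding rearr_thresholds_def by auto
  qed
  have "decr_rearr (\<lambda>k. x k + y k) (m + n) - decr_rearr x m \<le> decr_rearr y n"
  proof (rule decr_rearr_ge[OF y])
    fix t2 assume t2: "t2 \<in> rearr_thresholds y n"
    have "decr_rearr (\<lambda>k. x k + y k) (m + n) - t2 \<le> decr_rearr x m"
      by (rule decr_rearr_ge[OF x]) (use decr_rearr_le[OF sum_threshold[OF _ t2]] in force)
    thus "decr_rearr (\<lambda>k. x k + y k) (m + n) - decr_rearr x m \<le> t2" by simp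
  qed
  thus ?thesis by simp
qed

lemma decr_rearr_ge_peaks:
  assumes "x \<longlonglongrightarrow> 0" "finite I" "j < card I" "\<And>k. k \<in> I \<Longrightarrow> s \<le> \<bar>x k\<bar>"
  shows "s \<le> decr_rearr x j"
proof (rule decr_rearr_ge[OF assms(1)])
  fix t assume t: "t \<in> rearr_thresholds x j"
  show "s \<le> t"
  proof (rule ccontr)
    assume "\<not> s \<le> t"
    hence sub: "I \<subseteq> {k. \<bar>x k\<bar> > t}" using assms(4) by (auto simp: not_le intro: order.strict_trans2)
    have ft: "finite {k. \<bar>x k\<bar> > t}" "card {k. \<bar>x k\<bar> > t} \<le> j"
      using t unfolding rearr_thresholds_def by auto
    have "card I \<le> card {k. \<bar>x k\<bar> > t}" by (rule card_mono[OF ft(1) sub])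
    thus False using ft assms(3) by linarith
  qed
qed

lemma abs_le_decr_rearr_0: "x \<longlonglongrightarrow> 0 \<Longrightarrow> \<bar>x k\<bar> \<le> decr_rearr x 0"
  by (rule decr_rearr_ge_peaks[of _ "{k}"]) auto

lemma decr_rearr_beyond_support:
  assumes "finite S" "\<And>k. k \<notin> S \<Longrightarrow> x k = 0" "card S \<le> j"
  shows "decr_rearr x j = 0"
proof -
  have "{k. \<bar>x k\<bar> > 0} \<subseteq> S" using assms(2) by force
  hence "0 \<in> rearr_thresholds x j" using assms unfolding rearr_thresholds_def
    by (auto intro: finite_subset dest: card_mono[OF assms(1)])
  hence "decr_rearr x j \<le> 0" by (rule decr_rearr_le)
  moreover have "0 \<le> decr_rearr x j"
    by (rule decr_rearr_nonneg[OF finite_support_imp_null[OF assms(1,2)]])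
  ultimately show ?thesis by simp
qed

lemma finite_sorted_enumeration:
  fixes x :: "nat \<Rightarrow> real"
  assumes "finite S"
  obtains e where "bij_betw e {..<card S} S"
    "\<And>i j. i \<le> j \<Longrightarrow> j < card S \<Longrightarrow> \<bar>x (e j)\<bar> \<le> \<bar>x (e i)\<bar>"
proof -
  define L where "L = sort_key (\<lambda>k. - \<bar>x k\<bar>) (sorted_list_of_set S)"
  have d: "distinct L" and s: "set L = S" using assms by (auto simp: L_def)
  have len: "length L = card S" using distinct_card[OF d] s by simp
  have b: "bij_betw ((!) L) {..<card S} S" by (rule bij_betw_nth) (use d s len in auto)
  have srt: "sorted (map (\<lambda>k. - \<bar>x k\<bar>) L)" unfolding L_def by simp
  have "\<bar>x (L ! j)\<bar> \<le> \<bar>x (L ! i)\<bar>" if "i \<le> j" "j < card S" for i j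
    using sorted_nth_mono[OF srt, of i j] that len by simp
  thus ?thesis using b that by blast
qed

lemma decr_rearr_sorted_enumeration:
  assumes S: "finite S" and z: "\<And>k. k \<notin> S \<Longrightarrow> x k = 0"
    and e: "bij_betw e {..<card S} S"
    and srt: "\<And>i j. i \<le> j \<Longrightarrow> j < card S \<Longrightarrow> \<bar>x (e j)\<bar> \<le> \<bar>x (e i)\<bar>"
    and j: "j < card S"
  shows "decr_rearr x j = \<bar>x (e j)\<bar>"
proof -
  have sub: "{k. \<bar>x k\<bar> > \<bar>x (e j)\<bar>} \<subseteq> e ` {..<j}"
  proof
    fix k assume k: "k \<in> {k. \<bar>x k\<bar> > \<bar>x (e j)\<bar>}"
    hence "k \<in> S" using z by force
    then obtain i where i: "i < card S" "e i = k"
      using e unfolding bij_betw_def by (metis imageE lessThan_iff)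
    have "i < j" using srt[of j i] k i j by (cases "j \<le> i") auto
    thus "k \<in> e ` {..<j}" using i by auto
  qed
  have "card {k. \<bar>x k\<bar> > \<bar>x (e j)\<bar>} \<le> card (e ` {..<j})" by (rule card_mono) (use sub in auto)
  also have "\<dots> \<le> j" using card_image_le[of "{..<j}" e] by simp
  finally have "\<bar>x (e j)\<bar> \<in> rearr_thresholds x j"
    unfolding rearr_thresholds_def using sub by (auto intro: finite_subset)
  hence le: "decr_rearr x j \<le> \<bar>x (e j)\<bar>" by (rule decr_rearr_le)
  have "inj_on e {..j}" using e j by (auto simp: bij_betw_def intro: inj_on_subset)
  hence "card (e ` {..j}) = Suc j" using card_image by fastforce
  hence "\<bar>x (e j)\<bar> \<le> decr_rearr x j"
    using srt j
    by (intro decr_rearr_ge_peaks[OF finite_support_imp_null[OF S z], where I="e ` {..j}"]) auto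
  with le show ?thesis by simp
qed


section \<open>A rearrangement inequality\<close>

lemma rearrangement_swap_le:
  fixes v g :: "nat \<Rightarrow> real"
  assumes J: "finite J" "j0 \<in> J" "j1 \<in> J" "\<And>j. j \<in> J \<Longrightarrow> j0 \<le> j" "\<And>j. j \<in> J \<Longrightarrow> \<rho> j1 \<le> \<rho> j"
    and v: "\<And>a b. a \<le> b \<Longrightarrow> v b \<le> v a" and g: "\<And>a b. a \<le> b \<Longrightarrow> g b \<le> g a"
  shows "(\<Sum>j\<in>J. v (\<rho> j) * g j)
    \<le> (\<Sum>j\<in>J. v ((\<lambda>j. if j = j0 then \<rho> j1 else if j = j1 then \<rho> j0 else \<rho> j) j) * g j)"
    (is "_ \<le> (\<Sum>j\<in>J. v (?\<rho>' j) * g j)")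
proof (cases "j0 = j1")
  case True thus ?thesis by (intro eq_refl sum.cong) auto
next
  case False
  have split: "(\<Sum>j\<in>J. F j) = F j0 + F j1 + (\<Sum>j\<in>J - {j0} - {j1}. F j)" for F :: "nat \<Rightarrow> real"
    using J False by (simp add: sum.remove[of J j0] sum.remove[of "J - {j0}" j1] algebra_simps)
  have rest: "(\<Sum>j\<in>J - {j0} - {j1}. v (\<rho> j) * g j) = (\<Sum>j\<in>J - {j0} - {j1}. v (?\<rho>' j) * g j)"
    by (rule sum.cong) auto
  have "0 \<le> (v (\<rho> j1) - v (\<rho> j0)) * (g j0 - g j1)"
    using v[OF J(5)[OF J(2)]] g[OF J(4)[OF J(3)]] by simp
  hence "v (\<rho> j0) * g j0 + v (\<rho> j1) * g j1 \<le> v (?\<rho>' j0) * g j0 + v (?\<rho>' j1) * g j1"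
    using False by (simp add: algebra_simps)
  thus ?thesis using split[of "\<lambda>j. v (\<rho> j) * g j"] split[of "\<lambda>j. v (?\<rho>' j) * g j"] rest by linarith
qed

lemma sum_shift_down:
  fixes v g :: "nat \<Rightarrow> real"
  assumes J: "finite J" "inj_on \<rho> J" and pos: "\<And>j. j \<in> J \<Longrightarrow> 1 \<le> j" "\<And>j. j \<in> J \<Longrightarrow> 1 \<le> \<rho> j"
  obtains J' \<rho>' where "finite J'" "card J' = card J" "inj_on \<rho>' J'"
    "(\<Sum>j\<in>J. v (\<rho> j) * g j) = (\<Sum>i\<in>J'. v (\<rho>' i + 1) * g (i + 1))"
proof
  have inj_pred: "inj_on (\<lambda>j. j - 1) J"
    using pos(1) by (intro inj_onI) (metis One_nat_def Suc_pred' less_eq_Suc_le)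
  have mem: "i \<in> (\<lambda>j. j - 1) ` J \<longleftrightarrow> i + 1 \<in> J" for i
    using pos(1) by (force simp: image_iff Suc_le_eq)
  show "finite ((\<lambda>j. j - 1) ` J)" using J(1) by simp
  show "card ((\<lambda>j. j - 1) ` J) = card J" by (rule card_image[OF inj_pred])
  show "inj_on (\<lambda>i. \<rho> (i + 1) - 1) ((\<lambda>j. j - 1) ` J)"
  proof (rule inj_onI)
    fix a b assume "a \<in> (\<lambda>j. j - 1) ` J" "b \<in> (\<lambda>j. j - 1) ` J" "\<rho> (a + 1) - 1 = \<rho> (b + 1) - 1"
    moreover from calculation(1,2) have "a + 1 \<in> J" "b + 1 \<in> J" using mem by blast+
    ultimately show "a = b" using pos(2) inj_onD[OF J(2), of "a + 1" "b + 1"]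
      by (metis add_right_cancel le_add_diff_inverse2)
  qed
  show "(\<Sum>j\<in>J. v (\<rho> j) * g j) = (\<Sum>i\<in>(\<lambda>j. j - 1) ` J. v (\<rho> (i + 1) - 1 + 1) * g (i + 1))"
    unfolding sum.reindex[OF inj_pred] comp_def
  proof (intro sum.cong refl)
    fix j assume j: "j \<in> J"
    have "j - 1 + 1 = j" "\<rho> j - 1 + 1 = \<rho> j" using pos[OF j] by simp_all
    thus "v (\<rho> j) * g j = v (\<rho> (j - 1 + 1) - 1 + 1) * g (j - 1 + 1)" by simp
  qed
qed

text \<open>
  Both sequences decrease, so pairing v with g in the same order maximizes the sum: the smallest
  index of J is first matched with the smallest value of \<rho>, and the rest is shifted down by one.
\<close>
lemma rearrangement_inequality:
  fixes v g :: "nat \<Rightarrow> real"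
  assumes "finite J" "inj_on \<rho> J"
    and "\<And>a b. a \<le> b \<Longrightarrow> v b \<le> v a" "\<And>i. 0 \<le> v i"
    and "\<And>a b. a \<le> b \<Longrightarrow> g b \<le> g a" "\<And>i. 0 \<le> g i"
  shows "(\<Sum>j\<in>J. v (\<rho> j) * g j) \<le> (\<Sum>j<card J. v j * g j)"
  using assms
proof (induction "card J" arbitrary: J \<rho> v g)
  case 0 thus ?case by (simp add: card_eq_0_iff)
next
  case (Suc n J \<rho> v g)
  note fin = Suc.prems(1) and inj = Suc.prems(2)
  note vd = Suc.prems(3) and vp = Suc.prems(4) and gd = Suc.prems(5) and gp = Suc.prems(6)
  have ne: "J \<noteq> {}" using Suc.hyps(2) by auto
  define j0 where "j0 = Min J"
  have j0J: "j0 \<in> J" and j0min: "\<And>j. j \<in> J \<Longrightarrow> j0 \<le> j" unfolding j0_def using fin ne by auto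
  have "Min (\<rho> ` J) \<in> \<rho> ` J" using fin ne by simp
  then obtain j1 where j1J: "j1 \<in> J" and "\<rho> j1 = Min (\<rho> ` J)" by auto
  hence j1min: "\<And>j. j \<in> J \<Longrightarrow> \<rho> j1 \<le> \<rho> j" using fin by simp
  define \<rho>' where "\<rho>' = (\<lambda>j. if j = j0 then \<rho> j1 else if j = j1 then \<rho> j0 else \<rho> j)"
  have swap: "(\<Sum>j\<in>J. v (\<rho> j) * g j) \<le> (\<Sum>j\<in>J. v (\<rho>' j) * g j)"
    unfolding \<rho>'_def by (rule rearrangement_swap_le[of J j0 j1 \<rho>, OF fin j0J j1J j0min j1min vd gd])
  have inj': "inj_on \<rho>' J"
    using inj j0J j1J unfolding \<rho>'_def inj_on_def by (auto split: if_splits)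
  define J' where "J' = J - {j0}"
  have J'ge1: "1 \<le> j" if "j \<in> J'" for j
    using that j0min[of j] by (auto simp: J'_def)
  have \<rho>'ge1: "1 \<le> \<rho>' j" if "j \<in> J'" for j
  proof -
    have "\<rho>' j \<noteq> \<rho>' j0" using inj_onD[OF inj', of j j0] that j0J by (auto simp: J'_def)
    moreover have "\<rho>' j0 \<le> \<rho>' j" using j1min that j0J j1J by (auto simp: \<rho>'_def J'_def)
    ultimately show ?thesis by linarith
  qed
  have finJ': "finite J'" and cJ': "card J' = n" and injJ': "inj_on \<rho>' J'"
    using fin Suc.hyps(2) j0J inj_on_subset[OF inj'] by (auto simp: J'_def)
  obtain J'' \<rho>'' where J'': "finite J''" "card J'' = n" "inj_on \<rho>'' J''"
    and shift: "(\<Sum>j\<in>J'. v (\<rho>' j) * g j) = (\<Sum>i\<in>J''. v (\<rho>'' i + 1) * g (i + 1))"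
    using sum_shift_down[where J=J' and \<rho>=\<rho>' and v=v and g=g, OF finJ' injJ' J'ge1 \<rho>'ge1] cJ'
    by metis
  have IH: "(\<Sum>i\<in>J''. v (\<rho>'' i + 1) * g (i + 1)) \<le> (\<Sum>i<n. v (i + 1) * g (i + 1))"
    using Suc.hyps(1)[OF J''(2)[symmetric] J''(1,3), of "\<lambda>i. v (i + 1)" "\<lambda>i. g (i + 1)"]
      vd vp gd gp J''(2) by simp
  have "(\<Sum>j\<in>J. v (\<rho>' j) * g j) = v (\<rho>' j0) * g j0 + (\<Sum>j\<in>J'. v (\<rho>' j) * g j)"
    unfolding J'_def using fin j0J by (simp add: sum.remove)
  also have "\<dots> \<le> v 0 * g 0 + (\<Sum>i<n. v (i + 1) * g (i + 1))"
    using vd gd vp gp shift IH by (intro add_mono mult_mono) auto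
  also have "\<dots> = (\<Sum>j<Suc n. v j * g j)" by (subst sum.lessThan_Suc_shift) simp
  finally show ?case using swap Suc.hyps(2) by simp
qed

section \<open>The p-th power of the Lorentz norm\<close>

definition tail_from :: "nat \<Rightarrow> (nat \<Rightarrow> real) \<Rightarrow> nat \<Rightarrow> real" where
  "tail_from M x = (\<lambda>k. if M \<le> k then x k else 0)"

definition lorentz_modular :: "(nat \<Rightarrow> real) \<Rightarrow> real \<Rightarrow> (nat \<Rightarrow> real) \<Rightarrow> real" where
  "lorentz_modular w p x = (\<Sum>n. w n * decr_rearr x n powr p)"

lemma lorentz_norm_eq_modular: "lorentz_norm w p = (\<lambda>x. lorentz_modular w p x powr (1/p))"
  by (rule ext) (simp add: lorentz_norm_def lorentz_modular_def)

lemma lorentz_weightD: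
  assumes "lorentz_weight w"
  shows "w 0 = 1" "\<And>a b. a \<le> b \<Longrightarrow> w b \<le> w a" "\<And>n. 0 \<le> w n" "\<And>n. w n \<le> 1"
proof -
  have d: "decseq w" and l: "w \<longlonglongrightarrow> 0" and w0: "w 0 = 1"
    using assms by (auto simp: lorentz_weight_def)
  show "w 0 = 1" by fact
  show "\<And>a b. a \<le> b \<Longrightarrow> w b \<le> w a" using d by (auto simp: decseq_def)
  show "\<And>n. 0 \<le> w n" using decseq_ge[OF d l] by simp
  show "\<And>n. w n \<le> 1" using d w0 unfolding decseq_def by (metis zero_le)
qed

lemma lorentz_weight_partial_sums_unbounded:
  assumes "lorentz_weight w"
  obtains r where "B < (\<Sum>j<r. w j)"
proof -
  have "\<not> summable w" using assms by (simp add: lorentz_weight_def)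
  hence "\<not> (\<forall>r. (\<Sum>j<r. w j) \<le> B)"
    using summableI_nonneg_bounded[of w B] lorentz_weightD(3)[OF assms] by blast
  thus ?thesis using that by (auto simp: not_le)
qed

lemma lorentz_modular_finite_support:
  assumes p: "p > 0" and S: "finite S" and z: "\<And>k. k \<notin> S \<Longrightarrow> x k = 0"
  shows "lorentz_modular w p x = (\<Sum>j<card S. w j * decr_rearr x j powr p)"
  unfolding lorentz_modular_def
  by (rule suminf_finite) (use decr_rearr_beyond_support[where x=x, OF S z] p in auto)

lemma decr_rearr_support_enumeration:
  assumes S: "finite S" and z: "\<And>k. k \<notin> S \<Longrightarrow> x k = 0"
  shows "\<exists>\<sigma> e. bij_betw \<sigma> S {..<card S} \<and> (\<forall>k\<in>S. e (\<sigma> k) = k)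
    \<and> (\<forall>j<card S. decr_rearr x j = \<bar>x (e j)\<bar>)"
proof -
  obtain e where e: "bij_betw e {..<card S} S"
    and srt: "\<And>i j. i \<le> j \<Longrightarrow> j < card S \<Longrightarrow> \<bar>x (e j)\<bar> \<le> \<bar>x (e i)\<bar>"
    using finite_sorted_enumeration[OF S, of x] by blast
  have "bij_betw (inv_into {..<card S} e) S {..<card S}" by (rule bij_betw_inv_into[OF e])
  moreover have "\<forall>k\<in>S. e (inv_into {..<card S} e k) = k"
    using e by (auto simp: bij_betw_def intro: f_inv_into_f)
  moreover have "\<forall>j<card S. decr_rearr x j = \<bar>x (e j)\<bar>"
    using decr_rearr_sorted_enumeration[where x=x, OF S z e srt] by blast
  ultimately show ?thesis by blast
qed

lemma lorentz_modular_enumeration: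
  assumes p: "p > 0" and S: "finite S" and z: "\<And>k. k \<notin> S \<Longrightarrow> x k = 0"
  obtains \<sigma> where "bij_betw \<sigma> S {..<card S}"
    "lorentz_modular w p x = (\<Sum>k\<in>S. w (\<sigma> k) * \<bar>x k\<bar> powr p)"
proof -
  obtain \<sigma> e where \<sigma>: "bij_betw \<sigma> S {..<card S}" and e\<sigma>: "\<And>k. k \<in> S \<Longrightarrow> e (\<sigma> k) = k"
    and dr: "\<And>j. j < card S \<Longrightarrow> decr_rearr x j = \<bar>x (e j)\<bar>"
    using decr_rearr_support_enumeration[where x=x, OF S z] by blast
  have "lorentz_modular w p x = (\<Sum>j<card S. w j * decr_rearr x j powr p)"
    by (rule lorentz_modular_finite_support[OF p S z])
  also have "\<dots> = (\<Sum>j<card S. w j * \<bar>x (e j)\<bar> powr p)" using dr by (intro sum.cong) auto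
  also have "\<dots> = (\<Sum>k\<in>S. w (\<sigma> k) * \<bar>x (e (\<sigma> k))\<bar> powr p)"
    by (rule sum.reindex_bij_betw[OF \<sigma>, symmetric])
  also have "\<dots> = (\<Sum>k\<in>S. w (\<sigma> k) * \<bar>x k\<bar> powr p)" using e\<sigma> by simp
  finally show ?thesis by (rule that[OF \<sigma>])
qed

lemma lorentz_modular_ge_weighted_sum:
  assumes w: "lorentz_weight w" and p: "p > 0" and S: "finite S" and z: "\<And>k. k \<notin> S \<Longrightarrow> x k = 0"
    and A: "finite A" and \<pi>: "inj_on \<pi> A"
  shows "(\<Sum>k\<in>A. w (\<pi> k) * \<bar>x k\<bar> powr p) \<le> lorentz_modular w p x"
proof -
  obtain \<sigma> e where \<sigma>: "bij_betw \<sigma> S {..<card S}" and e\<sigma>: "\<And>k. k \<in> S \<Longrightarrow> e (\<sigma> k) = k"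
    and dr: "\<And>j. j < card S \<Longrightarrow> decr_rearr x j = \<bar>x (e j)\<bar>"
    using decr_rearr_support_enumeration[where x=x, OF S z] by blast
  note wf = lorentz_weightD[OF w]
  have x0: "x \<longlonglongrightarrow> 0" by (rule finite_support_imp_null[OF S z])
  define g where "g = (\<lambda>j. decr_rearr x j powr p)"
  have gd: "\<And>a b. a \<le> b \<Longrightarrow> g b \<le> g a" unfolding g_def
    using decr_rearr_antimono[OF x0] decr_rearr_nonneg[OF x0] p by (auto intro: powr_mono2)
  have inj\<sigma>: "inj_on \<sigma> (A \<inter> S)" using \<sigma> by (auto simp: bij_betw_def intro: inj_on_subset)
  have "(\<Sum>k\<in>A. w (\<pi> k) * \<bar>x k\<bar> powr p) = (\<Sum>k\<in>A \<inter> S. w (\<pi> k) * \<bar>x k\<bar> powr p)"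
    by (rule sum.mono_neutral_right) (use A z p in auto)
  also have "\<dots> = (\<Sum>j\<in>\<sigma> ` (A \<inter> S). w (\<pi> (e j)) * \<bar>x (e j)\<bar> powr p)"
    by (subst sum.reindex[OF inj\<sigma>]) (use e\<sigma> in auto)
  also have "\<dots> = (\<Sum>j\<in>\<sigma> ` (A \<inter> S). w (\<pi> (e j)) * g j)"
  proof (intro sum.cong refl)
    fix j assume "j \<in> \<sigma> ` (A \<inter> S)"
    hence "j < card S" using \<sigma> by (auto simp: bij_betw_def)
    thus "w (\<pi> (e j)) * \<bar>x (e j)\<bar> powr p = w (\<pi> (e j)) * g j" using dr by (simp add: g_def)
  qed
  also have "\<dots> \<le> (\<Sum>j<card (\<sigma> ` (A \<inter> S)). w j * g j)"
  proof (rule rearrangement_inequality)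
    show "inj_on (\<lambda>j. \<pi> (e j)) (\<sigma> ` (A \<inter> S))"
    proof (rule inj_onI)
      fix a b assume "a \<in> \<sigma> ` (A \<inter> S)" "b \<in> \<sigma> ` (A \<inter> S)" "\<pi> (e a) = \<pi> (e b)"
      then obtain ka kb where "ka \<in> A \<inter> S" "a = \<sigma> ka" "kb \<in> A \<inter> S" "b = \<sigma> kb" "\<pi> ka = \<pi> kb"
        using e\<sigma> by auto
      thus "a = b" using inj_onD[OF \<pi>] by auto
    qed
    show "0 \<le> g i" for i by (simp add: g_def)
  qed (use A wf gd in auto)
  also have "\<dots> \<le> (\<Sum>j<card S. w j * g j)"
  proof (rule sum_mono2)
    have "card (\<sigma> ` (A \<inter> S)) \<le> card S"
      using card_image_le[of "A \<inter> S" \<sigma>] card_mono[OF S, of "A \<inter> S"] A by auto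
    thus "{..<card (\<sigma> ` (A \<inter> S))} \<subseteq> {..<card S}" by auto
  qed (use wf in \<open>auto simp: g_def\<close>)
  also have "\<dots> = lorentz_modular w p x"
    using lorentz_modular_finite_support[OF p S z] by (simp add: g_def)
  finally show ?thesis .
qed

lemma lorentz_modular_disjoint_add_le:
  assumes w: "lorentz_weight w" and p: "p > 0"
    and Sx: "finite Sx" and zx: "\<And>k. k \<notin> Sx \<Longrightarrow> x k = 0"
    and Sy: "finite Sy" and zy: "\<And>k. k \<notin> Sy \<Longrightarrow> y k = 0"
    and d: "\<And>k. x k = 0 \<or> y k = 0"
  shows "lorentz_modular w p (\<lambda>k. x k + y k) \<le> lorentz_modular w p x + lorentz_modular w p y"
proof -
  define S where "S = Sx \<union> Sy"
  have S: "finite S" using Sx Sy by (simp add: S_def)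
  have z: "\<And>k. k \<notin> S \<Longrightarrow> x k + y k = 0" using zx zy by (auto simp: S_def)
  obtain \<sigma> where \<sigma>: "bij_betw \<sigma> S {..<card S}"
    and eq: "lorentz_modular w p (\<lambda>k. x k + y k) = (\<Sum>k\<in>S. w (\<sigma> k) * \<bar>x k + y k\<bar> powr p)"
    by (rule lorentz_modular_enumeration[where x="\<lambda>k. x k + y k", OF p S z])
  have inj: "inj_on \<sigma> S" using \<sigma> by (simp add: bij_betw_def)
  have "\<bar>x k + y k\<bar> powr p = \<bar>x k\<bar> powr p + \<bar>y k\<bar> powr p" for k
    using d[of k] p by auto
  hence "lorentz_modular w p (\<lambda>k. x k + y k)
      = (\<Sum>k\<in>S. w (\<sigma> k) * \<bar>x k\<bar> powr p) + (\<Sum>k\<in>S. w (\<sigma> k) * \<bar>y k\<bar> powr p)"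
    unfolding eq sum.distrib[symmetric] by (simp add: algebra_simps)
  also have "\<dots> \<le> lorentz_modular w p x + lorentz_modular w p y"
    by (intro add_mono lorentz_modular_ge_weighted_sum[OF w p Sx zx S inj]
        lorentz_modular_ge_weighted_sum[OF w p Sy zy S inj])
  finally show ?thesis .
qed

lemma sum_weight_shift_diff_le:
  fixes w :: "nat \<Rightarrow> real"
  assumes "\<And>n. 0 \<le> w n"
  shows "(\<Sum>j<n. w j - w (j + m)) \<le> (\<Sum>j<m. w j)"
proof -
  have "(\<Sum>j<n. w j - w (j + m)) = (\<Sum>j<m. w j) - (\<Sum>j<m. w (j + n))"
  proof (induction n)
    case (Suc n)
    have "(\<Sum>j<m. w (j + n) - w (Suc j + n)) = w (0 + n) - w (m + n)"
      by (rule sum_lessThan_telescope'[of "\<lambda>j. w (j + n)"])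
    hence "(\<Sum>j<m. w (j + n)) - (\<Sum>j<m. w (j + Suc n)) = w n - w (n + m)"
      by (simp add: sum_subtractf add.commute)
    thus ?case using Suc by simp
  qed simp
  also have "\<dots> \<le> (\<Sum>j<m. w j)" using assms by (simp add: sum_nonneg)
  finally show ?thesis .
qed

lemma lorentz_modular_shifted_weights_ge:
  assumes w: "lorentz_weight w" and p: "p > 0"
    and S: "finite S" and z: "\<And>k. k \<notin> S \<Longrightarrow> y k = 0" and s: "\<And>k. \<bar>y k\<bar> powr p \<le> s"
  obtains \<sigma> where "bij_betw \<sigma> S {..<card S}"
    "lorentz_modular w p y - real m * s \<le> (\<Sum>k\<in>S. w (\<sigma> k + m) * \<bar>y k\<bar> powr p)"
proof -
  note wf = lorentz_weightD[OF w]
  obtain \<sigma> where \<sigma>: "bij_betw \<sigma> S {..<card S}"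
    and eq: "lorentz_modular w p y = (\<Sum>k\<in>S. w (\<sigma> k) * \<bar>y k\<bar> powr p)"
    by (rule lorentz_modular_enumeration[OF p S z])
  have s0: "0 \<le> s" using s[of 0] by (meson order_trans powr_ge_zero)
  have "lorentz_modular w p y - (\<Sum>k\<in>S. w (\<sigma> k + m) * \<bar>y k\<bar> powr p)
      = (\<Sum>k\<in>S. (w (\<sigma> k) - w (\<sigma> k + m)) * \<bar>y k\<bar> powr p)"
    unfolding eq sum_subtractf[symmetric] by (simp add: algebra_simps)
  also have "\<dots> \<le> (\<Sum>k\<in>S. (w (\<sigma> k) - w (\<sigma> k + m)) * s)"
    by (intro sum_mono mult_left_mono s) (use wf in auto)
  also have "\<dots> = (\<Sum>j<card S. w j - w (j + m)) * s"
    unfolding sum_distrib_right by (rule sum.reindex_bij_betw[OF \<sigma>])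
  also have "\<dots> \<le> (\<Sum>j<m. w j) * s"
    by (intro mult_right_mono sum_weight_shift_diff_le s0) (use wf in auto)
  also have "\<dots> \<le> real m * s"
    using sum_mono[of "{..<m}" w "\<lambda>_. 1"] wf(4) s0 by (intro mult_right_mono) auto
  finally have "lorentz_modular w p y - real m * s \<le> (\<Sum>k\<in>S. w (\<sigma> k + m) * \<bar>y k\<bar> powr p)"
    by simp
  thus ?thesis by (rule that[OF \<sigma>])
qed

lemma inj_on_concat_enumerations:
  assumes \<sigma>x: "bij_betw \<sigma>x Sx {..<card Sx}" and Sx: "Sx \<subseteq> {..<m}"
    and \<sigma>y: "bij_betw \<sigma>y Sy {..<card Sy}" and Sy: "Sy \<subseteq> {m..}"
  shows "inj_on (\<lambda>k. if k < m then \<sigma>x k else \<sigma>y k + m) (Sx \<union> Sy)"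
proof (rule inj_onI)
  have "card Sx \<le> m" using card_mono[OF _ Sx] by simp
  hence lt: "\<sigma>x k < m" if "k \<in> Sx" for k
    using that \<sigma>x by (auto simp: bij_betw_def dest!: equalityD1)
  have injx: "inj_on \<sigma>x Sx" and injy: "inj_on \<sigma>y Sy" using \<sigma>x \<sigma>y by (auto simp: bij_betw_def)
  fix a b assume a: "a \<in> Sx \<union> Sy" and b: "b \<in> Sx \<union> Sy"
    and eq: "(if a < m then \<sigma>x a else \<sigma>y a + m) = (if b < m then \<sigma>x b else \<sigma>y b + m)"
  have "a \<in> Sx \<longleftrightarrow> a < m" "b \<in> Sx \<longleftrightarrow> b < m" using a b Sx Sy by auto
  thus "a = b" using a b eq lt[of a] lt[of b] inj_onD[OF injx, of a b] inj_onD[OF injy, of a b]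
    by (auto split: if_splits)
qed

text \<open>Pair the coordinates of x with the first m weights and those of y with the weights shifted
  by m.\<close>
lemma lorentz_modular_add_shifted_block_ge:
  assumes w: "lorentz_weight w" and p: "p > 0"
    and Sx: "finite Sx" "Sx \<subseteq> {..<m}" and zx: "\<And>k. k \<notin> Sx \<Longrightarrow> x k = 0"
    and Sy: "finite Sy" "Sy \<subseteq> {m..}" and zy: "\<And>k. k \<notin> Sy \<Longrightarrow> y k = 0"
    and s: "\<And>k. \<bar>y k\<bar> powr p \<le> s"
  shows "lorentz_modular w p x + lorentz_modular w p y - real m * s
      \<le> lorentz_modular w p (\<lambda>k. x k + y k)"
proof -
  obtain \<sigma>x where \<sigma>x: "bij_betw \<sigma>x Sx {..<card Sx}"
    and Phx: "lorentz_modular w p x = (\<Sum>k\<in>Sx. w (\<sigma>x k) * \<bar>x k\<bar> powr p)"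
    by (rule lorentz_modular_enumeration[OF p Sx(1) zx])
  obtain \<sigma>y where \<sigma>y: "bij_betw \<sigma>y Sy {..<card Sy}"
    and Phy: "lorentz_modular w p y - real m * s \<le> (\<Sum>k\<in>Sy. w (\<sigma>y k + m) * \<bar>y k\<bar> powr p)"
    by (rule lorentz_modular_shifted_weights_ge[OF w p Sy(1) zy s])
  define \<pi> where "\<pi> = (\<lambda>k. if k < m then \<sigma>x k else \<sigma>y k + m)"
  have disj: "Sx \<inter> Sy = {}" using Sx(2) Sy(2) by fastforce
  have "lorentz_modular w p x = (\<Sum>k\<in>Sx. w (\<pi> k) * \<bar>x k + y k\<bar> powr p)"
    unfolding Phx
  proof (intro sum.cong refl)
    fix k assume "k \<in> Sx"
    hence "k < m" "y k = 0" using Sx(2) disj zy by auto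
    thus "w (\<sigma>x k) * \<bar>x k\<bar> powr p = w (\<pi> k) * \<bar>x k + y k\<bar> powr p" by (simp add: \<pi>_def)
  qed
  moreover have "(\<Sum>k\<in>Sy. w (\<sigma>y k + m) * \<bar>y k\<bar> powr p) = (\<Sum>k\<in>Sy. w (\<pi> k) * \<bar>x k + y k\<bar> powr p)"
  proof (intro sum.cong refl)
    fix k assume "k \<in> Sy"
    hence "\<not> k < m" "x k = 0" using Sy(2) disj zx by auto
    thus "w (\<sigma>y k + m) * \<bar>y k\<bar> powr p = w (\<pi> k) * \<bar>x k + y k\<bar> powr p" by (simp add: \<pi>_def)
  qed
  ultimately have "lorentz_modular w p x + (\<Sum>k\<in>Sy. w (\<sigma>y k + m) * \<bar>y k\<bar> powr p)
      = (\<Sum>k\<in>Sx \<union> Sy. w (\<pi> k) * \<bar>x k + y k\<bar> powr p)"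
    by (simp add: sum.union_disjoint[OF Sx(1) Sy(1) disj])
  also have "\<dots> \<le> lorentz_modular w p (\<lambda>k. x k + y k)"
  proof (rule lorentz_modular_ge_weighted_sum[OF w p, where S="Sx \<union> Sy"])
    show "inj_on \<pi> (Sx \<union> Sy)" unfolding \<pi>_def
      by (rule inj_on_concat_enumerations[OF \<sigma>x Sx(2) \<sigma>y Sy(2)])
  qed (use zx zy Sx Sy in auto)
  finally show ?thesis using Phy by linarith
qed
lemma lorentz_space_null: "x \<in> lorentz_space w p \<Longrightarrow> x \<longlonglongrightarrow> 0"
  and lorentz_space_summable: "x \<in> lorentz_space w p \<Longrightarrow> summable (\<lambda>n. w n * decr_rearr x n powr p)"
  unfolding lorentz_space_def by auto

lemma lorentz_modular_nonneg:
  assumes w: "lorentz_weight w" and x: "x \<in> lorentz_space w p"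
  shows "0 \<le> lorentz_modular w p x"
  unfolding lorentz_modular_def using lorentz_space_summable[OF x] lorentz_weightD(3)[OF w]
    by (intro suminf_nonneg) auto

lemma abs_powr_le_lorentz_modular:
  assumes w: "lorentz_weight w" and p: "p > 0" and x: "x \<in> lorentz_space w p"
  shows "\<bar>x k\<bar> powr p \<le> lorentz_modular w p x"
proof -
  have "\<bar>x k\<bar> powr p \<le> decr_rearr x 0 powr p"
    by (rule powr_mono2) (use p abs_le_decr_rearr_0[OF lorentz_space_null[OF x]] in auto)
  also have "\<dots> = (\<Sum>n\<in>{0}. w n * decr_rearr x n powr p)" using lorentz_weightD(1)[OF w] by simp
  also have "\<dots> \<le> lorentz_modular w p x" unfolding lorentz_modular_def
    by (rule sum_le_suminf[OF lorentz_space_summable[OF x]]) (use lorentz_weightD(3)[OF w] in auto)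
  finally show ?thesis .
qed

lemma lorentz_modular_mono:
  assumes w: "lorentz_weight w" and p: "p > 0" and x: "x \<in> lorentz_space w p"
    and le: "\<And>k. \<bar>y k\<bar> \<le> \<bar>x k\<bar>"
  shows "y \<in> lorentz_space w p \<and> lorentz_modular w p y \<le> lorentz_modular w p x"
proof -
  have x0: "x \<longlonglongrightarrow> 0" by (rule lorentz_space_null[OF x])
  have y0: "y \<longlonglongrightarrow> 0"
    by (rule Lim_null_comparison[of _ "\<lambda>k. \<bar>x k\<bar>"]) (use le x0 tendsto_rabs_zero in auto)
  have t: "\<And>n. norm (w n * decr_rearr y n powr p) \<le> w n * decr_rearr x n powr p"
    using lorentz_weightD(3)[OF w] decr_rearr_mono[OF x0 le] decr_rearr_nonneg[OF y0] p
    by (auto intro!: mult_left_mono powr_mono2)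
  have s: "summable (\<lambda>n. w n * decr_rearr y n powr p)"
    by (rule summable_comparison_test'[OF lorentz_space_summable[OF x] t])
  have "lorentz_modular w p y \<le> lorentz_modular w p x" unfolding lorentz_modular_def
    by (rule suminf_le[OF _ s lorentz_space_summable[OF x]]) (use t in \<open>metis abs_le_D1 real_norm_def\<close>)
  thus ?thesis using s y0 unfolding lorentz_space_def by auto
qed

lemma lorentz_modular_scale:
  assumes w: "lorentz_weight w" and p: "p > 0" and x: "x \<in> lorentz_space w p"
  shows "(\<lambda>k. c * x k) \<in> lorentz_space w p \<and> lorentz_modular w p (\<lambda>k. c * x k)
      = \<bar>c\<bar> powr p * lorentz_modular w p x"
proof -
  have x0: "x \<longlonglongrightarrow> 0" by (rule lorentz_space_null[OF x])
  have eq: "(\<lambda>n. w n * decr_rearr (\<lambda>k. c * x k) n powr p)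
      = (\<lambda>n. \<bar>c\<bar> powr p * (w n * decr_rearr x n powr p))"
    using decr_rearr_scale[OF x0] decr_rearr_nonneg[OF x0] by (auto simp: powr_mult)
  have c0: "(\<lambda>k. c * x k) \<longlonglongrightarrow> 0" using tendsto_mult_right_zero[OF x0] by simp
  have s: "summable (\<lambda>n. w n * decr_rearr (\<lambda>k. c * x k) n powr p)"
    by (subst eq) (rule summable_mult[OF lorentz_space_summable[OF x]])
  have "lorentz_modular w p (\<lambda>k. c * x k) = (\<Sum>n. \<bar>c\<bar> powr p * (w n * decr_rearr x n powr p))"
    unfolding lorentz_modular_def by (subst eq) (rule refl)
  also have "\<dots> = \<bar>c\<bar> powr p * lorentz_modular w p x" unfolding lorentz_modular_def
    by (rule suminf_mult[OF lorentz_space_summable[OF x]])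
  finally show ?thesis using s c0 unfolding lorentz_space_def by auto
qed

lemma sum_lessThan_double_div2:
  fixes h :: "nat \<Rightarrow> real"
  shows "(\<Sum>k<2*N. h (k div 2)) = 2 * (\<Sum>n<N. h n)"
proof (induction N)
  case 0 thus ?case by simp
next
  case (Suc N)
  have "2 * Suc N = Suc (Suc (2 * N))" by simp
  hence "(\<Sum>k<2*Suc N. h (k div 2)) = (\<Sum>k<2*N. h (k div 2)) + h ((2*N) div 2) + h (Suc (2*N) div 2)"
    by simp
  also have "\<dots> = 2 * (\<Sum>n<N. h n) + 2 * h N" using Suc by simp
  finally show ?case by simp
qed

lemma powr_add_le_two_powr:
  fixes a b p :: real assumes "0 \<le> a" "0 \<le> b" "p > 0"
  shows "(a + b) powr p \<le> 2 powr p * (a powr p + b powr p)"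
proof -
  have "(a + b) powr p \<le> (2 * max a b) powr p"
    by (rule powr_mono2) (use assms in auto)
  also have "\<dots> = 2 powr p * max a b powr p" using assms by (simp add: powr_mult)
  also have "\<dots> \<le> 2 powr p * (a powr p + b powr p)"
    by (rule mult_left_mono) (auto simp: max_def)
  finally show ?thesis .
qed

lemma decr_rearr_add_powr_le:
  assumes x0: "x \<longlonglongrightarrow> 0" and y0: "y \<longlonglongrightarrow> 0" and p: "p > 0"
  shows "decr_rearr (\<lambda>k. x k + y k) k powr p
    \<le> 2 powr p * (decr_rearr x (k div 2) powr p + decr_rearr y (k div 2) powr p)"
proof -
  define n where "n = k div 2"
  have s0: "(\<lambda>k. x k + y k) \<longlonglongrightarrow> 0" using tendsto_add_zero[OF x0 y0] .
  have "decr_rearr (\<lambda>k. x k + y k) k \<le> decr_rearr (\<lambda>k. x k + y k) (n + n)"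
    by (rule decr_rearr_antimono[OF s0]) (simp add: n_def)
  also have "\<dots> \<le> decr_rearr x n + decr_rearr y n" by (rule decr_rearr_add_le[OF x0 y0])
  finally have "decr_rearr (\<lambda>k. x k + y k) k powr p \<le> (decr_rearr x n + decr_rearr y n) powr p"
    using p decr_rearr_nonneg[OF s0] by (intro powr_mono2) auto
  also have "\<dots> \<le> 2 powr p * (decr_rearr x n powr p + decr_rearr y n powr p)"
    by (rule powr_add_le_two_powr) (use decr_rearr_nonneg[OF x0] decr_rearr_nonneg[OF y0] p in auto)
  finally show ?thesis unfolding n_def .
qed

lemma lorentz_modular_add_le:
  assumes w: "lorentz_weight w" and p: "p > 0" and x: "x \<in> lorentz_space w p"
    and y: "y \<in> lorentz_space w p"
  shows "(\<lambda>k. x k + y k) \<in> lorentz_space w p \<and>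
     lorentz_modular w p (\<lambda>k. x k + y k)
       \<le> 2 powr (p + 1) * (lorentz_modular w p x + lorentz_modular w p y)"
proof -
  note wf = lorentz_weightD[OF w]
  have x0: "x \<longlonglongrightarrow> 0" by (rule lorentz_space_null[OF x])
  have y0: "y \<longlonglongrightarrow> 0" by (rule lorentz_space_null[OF y])
  have s0: "(\<lambda>k. x k + y k) \<longlonglongrightarrow> 0" using tendsto_add_zero[OF x0 y0] .
  define f where "f = (\<lambda>k. w k * decr_rearr (\<lambda>k. x k + y k) k powr p)"
  define h where "h = (\<lambda>n. 2 powr p * (w n * decr_rearr x n powr p + w n * decr_rearr y n powr p))"
  have hs: "summable h" unfolding h_def
    by (intro summable_mult summable_add lorentz_space_summable[OF x] lorentz_space_summable[OF y])
  have hsum: "suminf h = 2 powr p * (lorentz_modular w p x + lorentz_modular w p y)"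
    unfolding h_def lorentz_modular_def
    using suminf_mult[OF summable_add[OF lorentz_space_summable[OF x] lorentz_space_summable[OF y]]]
      suminf_add[OF lorentz_space_summable[OF x] lorentz_space_summable[OF y]] by simp
  have hp: "\<And>n. 0 \<le> h n" unfolding h_def using wf(3) by simp
  have fp: "\<And>k. 0 \<le> f k" unfolding f_def using wf(3) by simp
  have fh: "f k \<le> h (k div 2)" for k
    using mult_mono[OF wf(2)[of "k div 2" k] decr_rearr_add_powr_le[OF x0 y0 p, of k]] wf(3)
    unfolding f_def h_def by (simp add: algebra_simps)
  have part: "(\<Sum>k<N. f k) \<le> 2 * suminf h" for N
  proof -
    have "(\<Sum>k<N. f k) \<le> (\<Sum>k<2*N. f k)" by (rule sum_mono2) (use fp in auto)
    also have "\<dots> \<le> (\<Sum>k<2*N. h (k div 2))" by (rule sum_mono) (rule fh)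
    also have "\<dots> = 2 * (\<Sum>n<N. h n)" by (rule sum_lessThan_double_div2)
    also have "\<dots> \<le> 2 * suminf h" using sum_le_suminf[OF hs, of "{..<N}"] hp by simp
    finally show ?thesis .
  qed
  have fs: "summable f" by (rule summableI_nonneg_bounded[OF fp part])
  have "suminf f \<le> 2 * suminf h" by (rule suminf_le_const[OF fs part])
  also have "\<dots> = 2 powr (p + 1) * (lorentz_modular w p x + lorentz_modular w p y)" unfolding hsum
    by (simp add: powr_add)
  finally show ?thesis using fs s0 unfolding lorentz_space_def lorentz_modular_def f_def by auto
qed

text \<open>The first J weights contribute at most J t^p; beyond J, y is dominated by x.\<close>
lemma lorentz_modular_le_flat_dominated:
  assumes w: "lorentz_weight w" and p: "p > 0" and x: "x \<in> lorentz_space w p"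
    and le: "\<And>k. \<bar>y k\<bar> \<le> \<bar>x k\<bar>" and t: "0 \<le> t" "\<And>k. \<bar>y k\<bar> \<le> t"
  shows "lorentz_modular w p y \<le> real J * t powr p + (\<Sum>j. w (j + J) * decr_rearr x (j + J) powr p)"
proof -
  note wf = lorentz_weightD[OF w]
  have x0: "x \<longlonglongrightarrow> 0" by (rule lorentz_space_null[OF x])
  have y: "y \<in> lorentz_space w p" using lorentz_modular_mono[OF w p x le] by simp
  have y0: "y \<longlonglongrightarrow> 0" by (rule lorentz_space_null[OF y])
  define c where "c = (\<lambda>j. if j < J then t powr p else w j * decr_rearr x j powr p)"
  have bound: "w j * decr_rearr y j powr p \<le> c j" for j
  proof (cases "j < J")
    case True
    have "w j * decr_rearr y j powr p \<le> 1 * t powr p"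
      using wf p decr_rearr_le_bound[where x=y and n=j, OF t] decr_rearr_nonneg[OF y0]
      by (intro mult_mono powr_mono2) auto
    thus ?thesis using True by (simp add: c_def)
  next
    case False
    have "w j * decr_rearr y j powr p \<le> w j * decr_rearr x j powr p"
      using wf p decr_rearr_mono[OF x0 le] decr_rearr_nonneg[OF y0]
        by (intro mult_left_mono powr_mono2) auto
    thus ?thesis using False by (simp add: c_def)
  qed
  have "summable (\<lambda>j. c (j + J))"
    using summable_iff_shift[of "\<lambda>j. w j * decr_rearr x j powr p" J] lorentz_space_summable[OF x]
    by (simp add: c_def)
  hence cs: "summable c" by simp
  have "lorentz_modular w p y \<le> suminf c" unfolding lorentz_modular_def
    by (rule suminf_le[OF bound lorentz_space_summable[OF y] cs])
  also have "\<dots> = (\<Sum>j. c (j + J)) + (\<Sum>j<J. c j)" by (rule suminf_split_initial_segment[OF cs])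
  finally show ?thesis by (simp add: c_def)
qed

lemma lorentz_modular_tail:
  assumes w: "lorentz_weight w" and p: "p > 0" and x: "x \<in> lorentz_space w p"
  shows "(\<lambda>M. lorentz_modular w p (tail_from M x)) \<longlonglongrightarrow> 0"
proof (rule LIMSEQ_I)
  fix r :: real assume r: "0 < r"
  obtain J where J: "norm (\<Sum>j. w (j + J) * decr_rearr x (j + J) powr p) < r / 2"
    using suminf_exist_split[OF _ lorentz_space_summable[OF x], of "r / 2"] r by auto
  define t where "t = (r / (2 * (real J + 1))) powr (1/p)"
  have t: "0 < t" "real J * t powr p < r / 2"
    using r p by (auto simp: t_def powr_powr field_simps)
  obtain M where M: "\<forall>k\<ge>M. \<bar>x k\<bar> < t" using LIMSEQ_D[OF lorentz_space_null[OF x] t(1)] by auto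
  have "norm (lorentz_modular w p (tail_from n x)) < r" if n: "M \<le> n" for n
  proof -
    have "\<bar>tail_from n x k\<bar> \<le> \<bar>x k\<bar>" "\<bar>tail_from n x k\<bar> \<le> t" for k
      using M n t(1) by (auto simp: tail_from_def less_imp_le)
    hence "lorentz_modular w p (tail_from n x) \<le> real J * t powr p
        + (\<Sum>j. w (j + J) * decr_rearr x (j + J) powr p)"
      using t(1) by (intro lorentz_modular_le_flat_dominated[OF w p x]) auto
    moreover have "0 \<le> lorentz_modular w p (tail_from n x)"
      using lorentz_modular_mono[OF w p x, of "tail_from n x"]
      by (intro lorentz_modular_nonneg[OF w]) (auto simp: tail_from_def)
    ultimately show ?thesis using J t(2) by auto
  qed
  thus "\<exists>no. \<forall>n\<ge>no. norm (lorentz_modular w p (tail_from n x) - 0) < r" by auto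
qed

lemma lorentz_modular_ge_peaks:
  assumes w: "lorentz_weight w" and p: "p > 0" and x: "x \<in> lorentz_space w p"
    and I: "finite I" "r \<le> card I" and s: "0 \<le> s" "\<And>k. k \<in> I \<Longrightarrow> s \<le> \<bar>x k\<bar>"
  shows "s powr p * (\<Sum>j<r. w j) \<le> lorentz_modular w p x"
proof -
  note wf = lorentz_weightD[OF w]
  have x0: "x \<longlonglongrightarrow> 0" by (rule lorentz_space_null[OF x])
  have "s powr p * (\<Sum>j<r. w j) = (\<Sum>j<r. w j * s powr p)"
    by (simp add: sum_distrib_left mult.commute)
  also have "\<dots> \<le> (\<Sum>j<r. w j * decr_rearr x j powr p)"
  proof (rule sum_mono)
    fix j assume "j \<in> {..<r}"
    hence "s \<le> decr_rearr x j" using decr_rearr_ge_peaks[OF x0 I(1), of j s] I(2) s(2) by auto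
    thus "w j * s powr p \<le> w j * decr_rearr x j powr p"
      by (intro mult_left_mono powr_mono2) (use p s wf in auto)
  qed
  also have "\<dots> \<le> lorentz_modular w p x" unfolding lorentz_modular_def
    by (rule sum_le_suminf[OF lorentz_space_summable[OF x]]) (use wf(3) in auto)
  finally show ?thesis .
qed


section \<open>Quasi-normed sequence spaces\<close>

text \<open>\<Phi> plays the role of the p-th power of the norm. Both l_p and d_{w,p} are instances; only the
  domain of the operator needs to be of this kind.\<close>
locale modular_space =
  fixes E :: "(nat \<Rightarrow> real) set" and \<Phi> :: "(nat \<Rightarrow> real) \<Rightarrow> real" and p :: real
  assumes p_ge_1: "1 \<le> p"
    and zero_mem: "(\<lambda>k. 0) \<in> E"
    and nonneg: "x \<in> E \<Longrightarrow> 0 \<le> \<Phi> x"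
    and homogeneous: "x \<in> E \<Longrightarrow> (\<lambda>k. c * x k) \<in> E \<and> \<Phi> (\<lambda>k. c * x k) = \<bar>c\<bar> powr p * \<Phi> x"
    and quasi_triangle: "x \<in> E \<Longrightarrow> y \<in> E \<Longrightarrow>
      (\<lambda>k. x k + y k) \<in> E \<and> \<Phi> (\<lambda>k. x k + y k) \<le> 2 powr (p + 1) * (\<Phi> x + \<Phi> y)"
    and abs_powr_le: "x \<in> E \<Longrightarrow> \<bar>x k\<bar> powr p \<le> \<Phi> x"
    and solid: "x \<in> E \<Longrightarrow> (\<And>k. \<bar>y k\<bar> \<le> \<bar>x k\<bar>) \<Longrightarrow> y \<in> E \<and> \<Phi> y \<le> \<Phi> x"
    and tail_tendsto_0: "x \<in> E \<Longrightarrow> (\<lambda>M. \<Phi> (tail_from M x)) \<longlonglongrightarrow> 0"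
    and disjoint_add_le: "x \<in> E \<Longrightarrow> y \<in> E \<Longrightarrow> finite Sx \<Longrightarrow> (\<And>k. k \<notin> Sx \<Longrightarrow> x k = 0) \<Longrightarrow>
      finite Sy \<Longrightarrow> (\<And>k. k \<notin> Sy \<Longrightarrow> y k = 0) \<Longrightarrow> (\<And>k. x k = 0 \<or> y k = 0) \<Longrightarrow>
      \<Phi> (\<lambda>k. x k + y k) \<le> \<Phi> x + \<Phi> y"

lemma zero_mem_lorentz_space: "(\<lambda>k. 0) \<in> lorentz_space w p"
  unfolding lorentz_space_def using decr_rearr_zero by simp

lemma modular_space_lorentz:
  assumes w: "lorentz_weight w" and p: "1 \<le> p"
  shows "modular_space (lorentz_space w p) (lorentz_modular w p) p"
proof -
  have p0: "p > 0" using p by simp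
  show ?thesis
    by unfold_locales
      (auto simp: p zero_mem_lorentz_space lorentz_modular_nonneg[OF w]
        lorentz_modular_scale[OF w p0] lorentz_modular_add_le[OF w p0]
        abs_powr_le_lorentz_modular[OF w p0] lorentz_modular_mono[OF w p0]
        lorentz_modular_tail[OF w p0] intro: lorentz_modular_disjoint_add_le[OF w p0])
qed

definition lp_modular :: "real \<Rightarrow> (nat \<Rightarrow> real) \<Rightarrow> real" where
  "lp_modular p x = (\<Sum>n. \<bar>x n\<bar> powr p)"

lemma lp_norm_eq_modular: "lp_norm p = (\<lambda>x. lp_modular p x powr (1/p))"
  by (rule ext) (simp add: lp_norm_def lp_modular_def)

lemma lp_space_summable: "x \<in> lp_space p \<Longrightarrow> summable (\<lambda>n. \<bar>x n\<bar> powr p)"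
  by (simp add: lp_space_def)

lemma lp_modular_mono:
  assumes p: "p > 0" and x: "x \<in> lp_space p" and le: "\<And>k. \<bar>y k\<bar> \<le> \<bar>x k\<bar>"
  shows "y \<in> lp_space p \<and> lp_modular p y \<le> lp_modular p x"
proof -
  have t: "\<And>n. norm (\<bar>y n\<bar> powr p) \<le> \<bar>x n\<bar> powr p" using le p by (auto intro: powr_mono2)
  have s: "summable (\<lambda>n. \<bar>y n\<bar> powr p)"
    by (rule summable_comparison_test'[OF lp_space_summable[OF x] t])
  have "lp_modular p y \<le> lp_modular p x" unfolding lp_modular_def
    by (rule suminf_le[OF _ s lp_space_summable[OF x]]) (use le p in \<open>auto intro: powr_mono2\<close>)
  thus ?thesis using s by (simp add: lp_space_def)
qed

lemma lp_modular_scale: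
  assumes x: "x \<in> lp_space p"
  shows "(\<lambda>k. c * x k) \<in> lp_space p \<and> lp_modular p (\<lambda>k. c * x k) = \<bar>c\<bar> powr p * lp_modular p x"
proof -
  have eq: "(\<lambda>n. \<bar>c * x n\<bar> powr p) = (\<lambda>n. \<bar>c\<bar> powr p * \<bar>x n\<bar> powr p)"
    by (simp add: abs_mult powr_mult)
  show ?thesis
    unfolding lp_space_def lp_modular_def mem_Collect_eq eq
    using summable_mult[OF lp_space_summable[OF x]] suminf_mult[OF lp_space_summable[OF x]]
    by (simp add: lp_modular_def)
qed

lemma lp_modular_add_le:
  assumes p: "p > 0" and x: "x \<in> lp_space p" and y: "y \<in> lp_space p"
  shows "(\<lambda>k. x k + y k) \<in> lp_space p \<and>
    lp_modular p (\<lambda>k. x k + y k) \<le> 2 powr (p + 1) * (lp_modular p x + lp_modular p y)"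
proof -
  note sx = lp_space_summable[OF x] and sy = lp_space_summable[OF y]
  have t: "\<bar>x n + y n\<bar> powr p \<le> 2 powr (p + 1) * (\<bar>x n\<bar> powr p + \<bar>y n\<bar> powr p)" for n
  proof -
    have "\<bar>x n + y n\<bar> powr p \<le> (\<bar>x n\<bar> + \<bar>y n\<bar>) powr p" by (rule powr_mono2) (use p in auto)
    also have "\<dots> \<le> 2 powr p * (\<bar>x n\<bar> powr p + \<bar>y n\<bar> powr p)"
      by (rule powr_add_le_two_powr) (use p in auto)
    also have "\<dots> \<le> 2 powr (p + 1) * (\<bar>x n\<bar> powr p + \<bar>y n\<bar> powr p)"
      by (rule mult_right_mono) (auto simp: powr_add)
    finally show ?thesis .
  qed
  have sg: "summable (\<lambda>n. 2 powr (p + 1) * (\<bar>x n\<bar> powr p + \<bar>y n\<bar> powr p))"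
    by (intro summable_mult summable_add sx sy)
  have s: "summable (\<lambda>n. \<bar>x n + y n\<bar> powr p)"
    by (rule summable_comparison_test'[OF sg]) (use t in auto)
  have "lp_modular p (\<lambda>k. x k + y k) \<le> (\<Sum>n. 2 powr (p + 1) * (\<bar>x n\<bar> powr p + \<bar>y n\<bar> powr p))"
    unfolding lp_modular_def by (rule suminf_le[OF t s sg])
  also have "\<dots> = 2 powr (p + 1) * (lp_modular p x + lp_modular p y)" unfolding lp_modular_def
    using suminf_mult[OF summable_add[OF sx sy]] suminf_add[OF sx sy] by simp
  finally show ?thesis using s by (simp add: lp_space_def)
qed

lemma suminf_tail_tendsto_0:
  fixes f :: "nat \<Rightarrow> real"
  assumes "summable f"
  shows "(\<lambda>n. \<Sum>i. f (i + n)) \<longlonglongrightarrow> 0"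
  using suminf_exist_split[OF _ assms] by (intro LIMSEQ_I) auto

lemma lp_modular_tail:
  assumes p: "p > 0" and x: "x \<in> lp_space p"
  shows "(\<lambda>M. lp_modular p (tail_from M x)) \<longlonglongrightarrow> 0"
proof -
  have "lp_modular p (tail_from M x) = (\<Sum>i. \<bar>x (i + M)\<bar> powr p)" for M
  proof -
    have "summable (\<lambda>n. \<bar>tail_from M x n\<bar> powr p)"
      using lp_modular_mono[OF p x, of "tail_from M x"] by (auto simp: tail_from_def lp_space_def)
    from suminf_split_initial_segment[OF this, of M] show ?thesis
      using p by (simp add: lp_modular_def tail_from_def)
  qed
  thus ?thesis using suminf_tail_tendsto_0[OF lp_space_summable[OF x]] by simp
qed

lemma modular_space_lp:
  assumes p: "1 \<le> p"
  shows "modular_space (lp_space p) (lp_modular p) p"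
proof -
  have p0: "p > 0" using p by simp
  have disjoint: "lp_modular p (\<lambda>k. x k + y k) = lp_modular p x + lp_modular p y"
    if "x \<in> lp_space p" "y \<in> lp_space p" "\<And>k. x k = 0 \<or> y k = 0" for x y
  proof -
    have "(\<lambda>n. \<bar>x n + y n\<bar> powr p) = (\<lambda>n. \<bar>x n\<bar> powr p + \<bar>y n\<bar> powr p)"
      using that(3) p0 by (intro ext) (metis abs_zero add_0 add_0_right powr_0 less_irrefl)
    thus ?thesis unfolding lp_modular_def
      using suminf_add[OF lp_space_summable[OF that(1)] lp_space_summable[OF that(2)]] by simp
  qed
  have single: "\<bar>x k\<bar> powr p \<le> lp_modular p x" if "x \<in> lp_space p" for x k
    using sum_le_suminf[OF lp_space_summable[OF that], of "{k}"] by (simp add: lp_modular_def)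
  have nonneg: "0 \<le> lp_modular p x" if "x \<in> lp_space p" for x
    unfolding lp_modular_def by (rule suminf_nonneg[OF lp_space_summable[OF that]]) simp
  have "(\<lambda>k. 0) \<in> lp_space p" by (simp add: lp_space_def)
  thus ?thesis
    by unfold_locales
      (auto simp: p nonneg lp_modular_scale lp_modular_add_le[OF p0] single lp_modular_mono[OF p0]
        lp_modular_tail[OF p0] disjoint)
qed

section \<open>Linear algebra: vectors with many peaks\<close>

lemma sum_lessThan_remove_index:
  fixes F :: "nat \<Rightarrow> real"
  assumes "i0 < n"
  shows "(\<Sum>k<n. F k) = F i0 + (\<Sum>i<n - 1. F (if i < i0 then i else Suc i))"
proof -
  define s where "s = (\<lambda>i::nat. if i < i0 then i else Suc i)"
  have inj: "inj_on s {..<n - 1}" by (rule inj_onI) (auto simp: s_def split: if_splits)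
  have img: "s ` {..<n - 1} = {..<n} - {i0}"
  proof
    show "s ` {..<n - 1} \<subseteq> {..<n} - {i0}" using assms by (auto simp: s_def)
    show "{..<n} - {i0} \<subseteq> s ` {..<n - 1}"
    proof
      fix k assume k: "k \<in> {..<n} - {i0}"
      show "k \<in> s ` {..<n - 1}"
      proof (cases "k < i0")
        case True
        hence "s k = k" "k < n - 1" using assms by (auto simp: s_def)
        thus ?thesis by (metis imageI lessThan_iff)
      next
        case False
        hence "k > i0" using k by auto
        hence "s (k - 1) = k" "k - 1 < n - 1" using k by (auto simp: s_def)
        thus ?thesis by (metis imageI lessThan_iff)
      qed
    qed
  qed
  have "(\<Sum>k<n. F k) = F i0 + (\<Sum>k\<in>{..<n} - {i0}. F k)" using assms by (simp add: sum.remove)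
  also have "(\<Sum>k\<in>{..<n} - {i0}. F k) = (\<Sum>i<n - 1. F (s i))"
    unfolding img[symmetric] by (rule sum.reindex[OF inj, unfolded comp_def])
  finally show ?thesis by (simp add: s_def)
qed

lemma homogeneous_system_nontrivial_solution:
  fixes a :: "nat \<Rightarrow> nat \<Rightarrow> real"
  shows "q < n \<Longrightarrow> \<exists>c::nat\<Rightarrow>real. (\<exists>i<n. c i \<noteq> 0) \<and> (\<forall>j<q. (\<Sum>i<n. a j i * c i) = 0)"
proof (induction q arbitrary: n a)
  case 0 thus ?case by (intro exI[of _ "\<lambda>i. 1"]) auto
next
  case (Suc q n a)
  show ?case
  proof (cases "\<forall>i<n. a q i = 0")
    case True
    obtain c where c: "\<exists>i<n. c i \<noteq> 0" "\<forall>j<q. (\<Sum>i<n. a j i * c i) = 0" using Suc.IH[of n a] Suc.prems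
      by auto
    have "\<forall>j<Suc q. (\<Sum>i<n. a j i * c i) = 0"
    proof (intro allI impI)
      fix j assume "j < Suc q"
      thus "(\<Sum>i<n. a j i * c i) = 0" using c(2) True by (cases "j = q") auto
    qed
    thus ?thesis using c(1) by blast
  next
    case False
    then obtain i0 where i0: "i0 < n" "a q i0 \<noteq> 0" by auto
    define s where "s = (\<lambda>i::nat. if i < i0 then i else Suc i)"
    define b where "b = (\<lambda>j i. a j (s i) - a j i0 * a q (s i) / a q i0)"
    obtain c' where c': "\<exists>i<n - 1. c' i \<noteq> 0" "\<forall>j<q. (\<Sum>i<n - 1. b j i * c' i) = 0"
    proof -
      have "q < n - 1" using Suc.prems by simp
      from Suc.IH[of "n - 1" b, OF this] show ?thesis using that by blast
    qed
    define t where "t = - (\<Sum>i<n - 1. a q (s i) * c' i) / a q i0"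
    define c where "c = (\<lambda>k. if k = i0 then t else if k < i0 then c' k else c' (k - 1))"
    have cs: "c (s i) = c' i" for i by (auto simp: c_def s_def)
    have row: "(\<Sum>k<n. a j k * c k) = a j i0 * t + (\<Sum>i<n - 1. a j (s i) * c' i)" for j
      using sum_lessThan_remove_index[OF i0(1), of "\<lambda>k. a j k * c k"] cs by (simp add: c_def s_def)
    have "\<forall>j<Suc q. (\<Sum>i<n. a j i * c i) = 0"
    proof (intro allI impI)
      fix j assume j: "j < Suc q"
      show "(\<Sum>i<n. a j i * c i) = 0"
      proof (cases "j = q")
        case True thus ?thesis unfolding row using i0(2) by (simp add: t_def)
      next
        case False
        hence jq: "j < q" using j by simp
        have "(\<Sum>i<n - 1. a j (s i) * c' i)
            = (\<Sum>i<n - 1. b j i * c' i + a j i0 / a q i0 * (a q (s i) * c' i))"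
          by (rule sum.cong) (auto simp: b_def field_simps i0(2))
        also have "\<dots> = (\<Sum>i<n - 1. b j i * c' i) + a j i0 / a q i0 * (\<Sum>i<n - 1. a q (s i) * c' i)"
          by (simp add: sum.distrib sum_distrib_left)
        also have "\<dots> = - a j i0 * t" using c'(2) jq i0(2) by (simp add: t_def field_simps)
        finally show ?thesis unfolding row by simp
      qed
    qed
    moreover have "\<exists>i<n. c i \<noteq> 0"
    proof -
      obtain i where i: "i < n - 1" "c' i \<noteq> 0" using c'(1) by auto
      have "s i < n" using i by (auto simp: s_def)
      thus ?thesis using i cs by metis
    qed
    ultimately show ?thesis by blast
  qed
qed

lemma null_seq_lin_comb:
  fixes h :: "nat \<Rightarrow> nat \<Rightarrow> real"
  assumes "\<And>i. i < n \<Longrightarrow> h i \<longlonglongrightarrow> 0"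
  shows "(\<lambda>k. \<Sum>i<n. c i * h i k) \<longlonglongrightarrow> 0"
proof -
  have "(\<lambda>k. \<Sum>i<n. c i * h i k) \<longlonglongrightarrow> (\<Sum>i<n. c i * 0)"
    by (intro tendsto_sum tendsto_mult tendsto_const) (use assms in auto)
  thus ?thesis by simp
qed

lemma first_touch_time:
  fixes u y s :: real
  assumes "\<bar>u\<bar> \<le> s" "y \<noteq> 0"
  defines "t0 \<equiv> (s - sgn y * u) / \<bar>y\<bar>"
  shows "0 \<le> t0" "\<And>t. 0 \<le> t \<Longrightarrow> t \<le> t0 \<Longrightarrow> \<bar>u + t * y\<bar> \<le> s" "\<bar>u + t0 * y\<bar> = s"
proof -
  consider "y > 0" | "y < 0" using assms(2) by linarith
  note cs = this
  show "0 \<le> t0" using cs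
  proof cases
    case 1 thus ?thesis using assms(1) by (simp add: t0_def)
  next
    case 2
    have "0 \<le> s + u" using assms(1) by linarith
    thus ?thesis using 2 by (simp add: t0_def divide_nonneg_neg)
  qed
  show "\<bar>u + t * y\<bar> \<le> s" if t: "0 \<le> t" "t \<le> t0" for t
    using cs
  proof cases
    case 1
    have "t * y \<le> t0 * y" using t 1 by (intro mult_right_mono) auto
    moreover have "t0 * y = s - u" using 1 by (simp add: t0_def)
    moreover have "0 \<le> t * y" using t 1 by simp
    ultimately show ?thesis using assms(1) by auto
  next
    case 2
    have "t0 * y \<le> t * y" using t 2 by (intro mult_right_mono_neg) auto
    moreover have "t0 * y = - s - u" using 2 by (simp add: t0_def field_simps)
    moreover have "t * y \<le> 0" using t 2 by (simp add: mult_nonneg_nonpos)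
    ultimately show ?thesis using assms(1) by auto
  qed
  show "\<bar>u + t0 * y\<bar> = s"
    using cs assms(1)
  proof cases
    case 1 thus ?thesis using assms(1) by (simp add: t0_def)
  next
    case 2
    have "t0 * y = - s - u" using 2 by (simp add: t0_def field_simps)
    thus ?thesis using assms(1) by auto
  qed
qed


text \<open>Moving from u along y, some coordinate with y k \<noteq> 0 first reaches modulus s; finitely many
  candidates suffice because u and y are null sequences.\<close>
lemma exists_touching_scalar:
  fixes u y :: "nat \<Rightarrow> real"
  assumes u: "u \<longlonglongrightarrow> 0" and y: "y \<longlonglongrightarrow> 0" and s: "s > 0" and ub: "\<And>k. \<bar>u k\<bar> \<le> s"
    and k0: "y k0 \<noteq> 0"
  obtains t k1 where "y k1 \<noteq> 0" "\<And>k. \<bar>u k + t * y k\<bar> \<le> s" "\<bar>u k1 + t * y k1\<bar> = s"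
proof -
  define tt where "tt = (\<lambda>k. (s - sgn (y k) * u k) / \<bar>y k\<bar>)"
  define T where "T = tt k0"
  define K where "K = {k. y k \<noteq> 0 \<and> tt k \<le> T}"
  have tt0: "0 \<le> tt k" if "y k \<noteq> 0" for k
    unfolding tt_def by (rule first_touch_time(1)[OF ub that])
  have "K \<subseteq> {k. s \<le> \<bar>\<bar>u k\<bar> + T * \<bar>y k\<bar>\<bar>}"
  proof
    fix k assume k: "k \<in> K"
    hence "s - sgn (y k) * u k \<le> T * \<bar>y k\<bar>" by (simp add: K_def tt_def divide_le_eq)
    moreover have "sgn (y k) * u k \<le> \<bar>u k\<bar>" by (cases "y k > 0") (auto simp: sgn_if)
    ultimately show "k \<in> {k. s \<le> \<bar>\<bar>u k\<bar> + T * \<bar>y k\<bar>\<bar>}" using tt0[OF k0] by (auto simp: T_def)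
  qed
  moreover have "(\<lambda>k. \<bar>u k\<bar> + T * \<bar>y k\<bar>) \<longlonglongrightarrow> 0"
    using tendsto_add[OF tendsto_rabs_zero[OF u] tendsto_mult_right_zero[OF tendsto_rabs_zero[OF y]]]
    by simp
  ultimately have finK: "finite K" using null_seq_finite_abs_ge[OF _ s] finite_subset by blast
  have k0K: "k0 \<in> K" using k0 by (simp add: K_def T_def)
  have "Min (tt ` K) \<in> tt ` K" using finK k0K by (intro Min_in) auto
  then obtain k1 where k1: "k1 \<in> K" "tt k1 = Min (tt ` K)" by (metis imageE)
  have y1: "y k1 \<noteq> 0" using k1 by (simp add: K_def)
  have min_le: "tt k1 \<le> tt k" if "y k \<noteq> 0" for k
  proof (cases "k \<in> K")
    case True thus ?thesis using finK k1(2) by simp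
  next
    case False thus ?thesis using that k1 by (auto simp: K_def)
  qed
  show ?thesis
  proof (rule that[OF y1])
    show "\<bar>u k + tt k1 * y k\<bar> \<le> s" for k
    proof (cases "y k = 0")
      case True thus ?thesis using ub[of k] by simp
    next
      case False
      from first_touch_time(2)[OF ub[of k] False tt0[OF y1]] min_le[OF False]
      show ?thesis by (simp add: tt_def)
    qed
    show "\<bar>u k1 + tt k1 * y k1\<bar> = s"
      unfolding tt_def by (rule first_touch_time(3)[OF ub y1])
  qed
qed

lemma homogeneous_system_vanishing_on:
  fixes a h :: "nat \<Rightarrow> nat \<Rightarrow> real"
  assumes I: "finite I" and "q + card I < n"
  shows "\<exists>d. (\<exists>i<n. d i \<noteq> 0) \<and> (\<forall>j<q. (\<Sum>i<n. a j i * d i) = 0)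
    \<and> (\<forall>k\<in>I. (\<Sum>i<n. d i * h i k) = 0)"
proof -
  obtain \<iota> where \<iota>: "bij_betw \<iota> {0..<card I} I" using ex_bij_betw_nat_finite[OF I] by blast
  define a' where "a' = (\<lambda>j i. if j < q then a j i else h i (\<iota> (j - q)))"
  obtain d where d: "\<exists>i<n. d i \<noteq> 0" "\<forall>j<q + card I. (\<Sum>i<n. a' j i * d i) = 0"
    using homogeneous_system_nontrivial_solution[of "q + card I" n a'] assms(2) by auto
  have "(\<Sum>i<n. a j i * d i) = 0" if "j < q" for j
    using d(2)[rule_format, of j] that by (simp add: a'_def)
  moreover have "(\<Sum>i<n. d i * h i k) = 0" if k: "k \<in> I" for k
  proof -
    have "k \<in> \<iota> ` {0..<card I}" using k \<iota> by (simp add: bij_betw_def)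
    then obtain j where j: "j < card I" "\<iota> j = k" by auto
    have "(\<Sum>i<n. a' (q + j) i * d i) = 0" using d(2) j by auto
    thus ?thesis unfolding a'_def using j by (simp add: mult.commute)
  qed
  ultimately show ?thesis using d(1) by blast
qed

text \<open>
  Each new peak is produced by solving r further homogeneous conditions, which keeps
  the existing peaks in place, and moving along the solution until a new coordinate touches the
  maximum.
\<close>
lemma exists_lin_comb_with_peaks:
  fixes h :: "nat \<Rightarrow> nat \<Rightarrow> real" and a :: "nat \<Rightarrow> nat \<Rightarrow> real"
  assumes h0: "\<And>i. i < n \<Longrightarrow> h i \<longlonglongrightarrow> 0"
    and nontrivial: "\<And>c. \<forall>j<q. (\<Sum>i<n. a j i * c i) = 0 \<Longrightarrow> \<exists>i<n. c i \<noteq> 0 \<Longrightarrow>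
      \<exists>k. (\<Sum>i<n. c i * h i k) \<noteq> 0"
    and "q + r \<le> n" "q < n"
  shows "\<exists>c s I. (\<forall>j<q. (\<Sum>i<n. a j i * c i) = 0) \<and> (\<exists>i<n. c i \<noteq> 0) \<and> s > 0
     \<and> finite I \<and> r \<le> card I \<and> (\<forall>k\<in>I. \<bar>\<Sum>i<n. c i * h i k\<bar> = s) \<and> (\<forall>k. \<bar>\<Sum>i<n. c i * h i k\<bar> \<le> s)"
  using assms(3)
proof (induction r)
  case 0
  obtain c where c: "\<exists>i<n. c i \<noteq> 0" "\<forall>j<q. (\<Sum>i<n. a j i * c i) = 0"
    using homogeneous_system_nontrivial_solution[of q n a] assms(4) by blast
  obtain B where B: "B \<ge> 0" "\<forall>k. \<bar>\<Sum>i<n. c i * h i k\<bar> \<le> B"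
    using null_seq_abs_bounded[OF null_seq_lin_comb[where h=h and n=n, OF h0]] by blast
  hence "\<forall>k. \<bar>\<Sum>i<n. c i * h i k\<bar> \<le> B + 1" by (meson add_increasing2 less_eq_real_def zero_less_one)
  thus ?case using c B(1) by (intro exI[of _ c] exI[of _ "B + 1"] exI[of _ "{}"]) simp
next
  case (Suc r)
  obtain c s I where c: "\<forall>j<q. (\<Sum>i<n. a j i * c i) = 0" "\<exists>i<n. c i \<noteq> 0" and s: "s > 0"
    and I: "finite I" "r \<le> card I" and peaks: "\<forall>k\<in>I. \<bar>\<Sum>i<n. c i * h i k\<bar> = s"
    and ub: "\<forall>k. \<bar>\<Sum>i<n. c i * h i k\<bar> \<le> s"
    using Suc.IH Suc.prems by fastforce
  show ?case
  proof (cases "Suc r \<le> card I")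
    case True thus ?thesis using c s I peaks ub by blast
  next
    case False
    hence cI: "card I = r" using I by simp
    obtain d where d: "\<exists>i<n. d i \<noteq> 0" and d_cond: "\<forall>j<q. (\<Sum>i<n. a j i * d i) = 0"
      and y_peaks: "\<forall>k\<in>I. (\<Sum>i<n. d i * h i k) = 0"
      using homogeneous_system_vanishing_on[OF I(1), of q n a h] Suc.prems cI by auto
    define u where "u = (\<lambda>k. \<Sum>i<n. c i * h i k)"
    define y where "y = (\<lambda>k. \<Sum>i<n. d i * h i k)"
    obtain k0 where k0: "y k0 \<noteq> 0" using nontrivial[OF d_cond d] unfolding y_def by blast
    obtain t k1 where y1: "y k1 \<noteq> 0" and ub': "\<And>k. \<bar>u k + t * y k\<bar> \<le> s"
      and touch: "\<bar>u k1 + t * y k1\<bar> = s"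
    proof -
      have "u \<longlonglongrightarrow> 0" "y \<longlonglongrightarrow> 0" "\<And>k. \<bar>u k\<bar> \<le> s"
        using ub unfolding u_def y_def by (auto intro: null_seq_lin_comb h0)
      from exists_touching_scalar[OF this(1,2) s this(3) k0] show thesis using that by blast
    qed
    define c' where "c' = (\<lambda>i. c i + t * d i)"
    have comb: "(\<Sum>i<n. c' i * h i k) = u k + t * y k" for k
      unfolding c'_def u_def y_def by (simp add: algebra_simps sum.distrib sum_distrib_left)
    have "\<forall>j<q. (\<Sum>i<n. a j i * c' i) = 0"
      using c(1) d_cond by (simp add: c'_def algebra_simps sum.distrib sum_distrib_left[symmetric])
    moreover have "\<exists>i<n. c' i \<noteq> 0"
    proof (rule ccontr)
      assume "\<not> (\<exists>i<n. c' i \<noteq> 0)"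
      hence "(\<Sum>i<n. c' i * h i k1) = 0" by simp
      thus False using touch s comb[of k1] by simp
    qed
    moreover have "k1 \<notin> I" using y_peaks y1 unfolding y_def by auto
    hence "finite (insert k1 I) \<and> Suc r \<le> card (insert k1 I)" using I cI by simp
    moreover have "\<forall>k\<in>insert k1 I. \<bar>\<Sum>i<n. c' i * h i k\<bar> = s"
      using touch peaks y_peaks comb unfolding u_def y_def by auto
    moreover have "\<forall>k. \<bar>\<Sum>i<n. c' i * h i k\<bar> \<le> s" using ub' comb by simp
    ultimately show ?thesis using s by (intro exI[of _ c'] exI[of _ s] exI[of _ "insert k1 I"]) simp
  qed
qed

lemma lin_subspace_add: "lin_subspace Z \<Longrightarrow> x \<in> Z \<Longrightarrow> y \<in> Z \<Longrightarrow> (\<lambda>k. x k + y k) \<in> Z"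
  and lin_subspace_scale: "lin_subspace Z \<Longrightarrow> x \<in> Z \<Longrightarrow> (\<lambda>k. c * x k) \<in> Z"
  and lin_subspace_zero: "lin_subspace Z \<Longrightarrow> (\<lambda>k. 0) \<in> Z"
  unfolding lin_subspace_def by blast+

lemma lin_subspace_diff: "lin_subspace Z \<Longrightarrow> x \<in> Z \<Longrightarrow> y \<in> Z \<Longrightarrow> (\<lambda>k. x k - y k) \<in> Z"
  using lin_subspace_add[of Z x "\<lambda>k. (-1) * y k"] lin_subspace_scale[of Z y "-1"] by simp

lemma lin_subspace_sum:
  fixes n :: nat
  assumes "lin_subspace Z" "\<And>i. i < n \<Longrightarrow> f i \<in> Z"
  shows "(\<lambda>k. \<Sum>i<n. c i * f i k) \<in> Z"
  using assms(2)
proof (induction n)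
  case 0 thus ?case using lin_subspace_zero[OF assms(1)] by simp
next
  case (Suc n)
  have "(\<lambda>k. (\<Sum>i<n. c i * f i k) + c n * f n k) \<in> Z"
    using Suc by (intro lin_subspace_add[OF assms(1)] lin_subspace_scale[OF assms(1)]) auto
  thus ?case by simp
qed

lemma bounded_ops_mem: "T \<in> bounded_ops NX NY X Y \<Longrightarrow> x \<in> X \<Longrightarrow> T x \<in> Y"
  and bounded_ops_add: "T \<in> bounded_ops NX NY X Y \<Longrightarrow> x \<in> X \<Longrightarrow> y \<in> X \<Longrightarrow>
    T (\<lambda>k. x k + y k) = (\<lambda>k. T x k + T y k)"
  and bounded_ops_scale: "T \<in> bounded_ops NX NY X Y \<Longrightarrow> x \<in> X \<Longrightarrow> T (\<lambda>k. c * x k) = (\<lambda>k. c * T x k)"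
  and bounded_ops_bound: "T \<in> bounded_ops NX NY X Y \<Longrightarrow> \<exists>C. \<forall>x\<in>X. NY (T x) \<le> C * NX x"
  unfolding bounded_ops_def by blast+

lemma bounded_ops_zero:
  assumes "T \<in> bounded_ops NX NY X Y" "lin_subspace X"
  shows "T (\<lambda>k. 0) = (\<lambda>k. 0)"
  using bounded_ops_scale[OF assms(1) lin_subspace_zero[OF assms(2)], of 0] by simp

lemma bounded_ops_diff:
  assumes "T \<in> bounded_ops NX NY X Y" "lin_subspace X" "x \<in> X" "y \<in> X"
  shows "T (\<lambda>k. x k - y k) = (\<lambda>k. T x k - T y k)"
  using bounded_ops_add[OF assms(1,3) lin_subspace_scale[OF assms(2,4), of "-1"]]
    bounded_ops_scale[OF assms(1,4), of "-1"] by simp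

lemma bounded_ops_sum:
  fixes n :: nat
  assumes T: "T \<in> bounded_ops NX NY X Y" and X: "lin_subspace X" and f: "\<And>i. i < n \<Longrightarrow> f i \<in> X"
  shows "T (\<lambda>k. \<Sum>i<n. c i * f i k) = (\<lambda>k. \<Sum>i<n. c i * T (f i) k)"
  using f
proof (induction n)
  case 0 thus ?case using bounded_ops_zero[OF T X] by simp
next
  case (Suc n)
  have "T (\<lambda>k. \<Sum>i<Suc n. c i * f i k) = T (\<lambda>k. (\<Sum>i<n. c i * f i k) + c n * f n k)" by simp
  also have "\<dots> = (\<lambda>k. T (\<lambda>k. \<Sum>i<n. c i * f i k) k + T (\<lambda>k. c n * f n k) k)"
    using Suc.prems
      by (intro bounded_ops_add[OF T] lin_subspace_sum[OF X] lin_subspace_scale[OF X]) auto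
  also have "T (\<lambda>k. c n * f n k) = (\<lambda>k. c n * T (f n) k)"
    using Suc.prems by (intro bounded_ops_scale[OF T]) simp
  finally show ?case using Suc by simp
qed

lemma squeeze_null_seq:
  fixes f g :: "nat \<Rightarrow> real"
  shows "(\<And>j. 0 \<le> f j) \<Longrightarrow> (\<And>j. f j \<le> g j) \<Longrightarrow> g \<longlonglongrightarrow> 0 \<Longrightarrow> f \<longlonglongrightarrow> 0"
  by (rule Lim_null_comparison[of _ g]) auto

lemma mult_root_le_imp_powr_le:
  fixes a b e p :: real
  assumes "0 \<le> a" "0 \<le> b" "0 < e" "0 < p" "e * a powr (1/p) \<le> b powr (1/p)"
  shows "e powr p * a \<le> b"
proof -
  have "(e * a powr (1/p)) powr p \<le> (b powr (1/p)) powr p"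
    by (rule powr_mono2) (use assms in auto)
  thus ?thesis using assms by (simp add: powr_mult powr_powr)
qed

lemma mult_le_imp_root_le:
  fixes a b e p :: real
  assumes "0 \<le> a" "0 \<le> b" "0 < e" "0 < p" "e * a \<le> b"
  shows "e powr (1/p) * a powr (1/p) \<le> b powr (1/p)"
proof -
  have "(e * a) powr (1/p) \<le> b powr (1/p)" by (rule powr_mono2) (use assms in auto)
  thus ?thesis using assms by (simp add: powr_mult)
qed

lemma root_le_mult_imp_le:
  fixes a b C p :: real
  assumes "0 \<le> a" "0 \<le> b" "0 < p" "b powr (1/p) \<le> C * a powr (1/p)"
  shows "b \<le> max C 1 powr p * a"
proof -
  have h: "b powr (1/p) \<le> max C 1 * a powr (1/p)"
    using assms(4) mult_right_mono[of C "max C 1" "a powr (1/p)"] by simp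
  have "(b powr (1/p)) powr p \<le> (max C 1 * a powr (1/p)) powr p"
    by (rule powr_mono2) (use h assms in auto)
  thus ?thesis using assms by (simp add: powr_mult powr_powr)
qed

context modular_space
begin

lemma lin_subspace_carrier: "lin_subspace E"
  unfolding lin_subspace_def using zero_mem quasi_triangle homogeneous by blast

lemma four_le_two_powr_Suc: "4 \<le> 2 powr (p + 1)"
proof -
  have "2 powr 2 \<le> 2 powr (p + 1)" by (rule powr_mono) (use p_ge_1 in auto)
  thus ?thesis by simp
qed

lemma modular_zero: "\<Phi> (\<lambda>k. 0) = 0"
  using homogeneous[OF zero_mem, of 0] by simp

lemma minus_mem: "x \<in> E \<Longrightarrow> (\<lambda>k. - x k) \<in> E \<and> \<Phi> (\<lambda>k. - x k) = \<Phi> x"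
  using homogeneous[of x "-1"] by simp

lemma modular_pos: "x \<in> E \<Longrightarrow> x k \<noteq> 0 \<Longrightarrow> 0 < \<Phi> x"
  using abs_powr_le[of x k] by (smt (verit) powr_gt_zero)

text \<open>Iterating the quasi-triangle inequality costs a geometric factor; it is compensated below by
  choosing the error terms geometrically small.\<close>
lemma sum_le_geometric:
  "(\<And>n. n < L \<Longrightarrow> y n \<in> E) \<Longrightarrow> (\<lambda>k. \<Sum>n<L. y n k) \<in> E \<and>
     \<Phi> (\<lambda>k. \<Sum>n<L. y n k) \<le> (\<Sum>n<L. (2 powr (p + 1)) ^ (n + 1) * \<Phi> (y n))"
proof (induction L arbitrary: y)
  case 0 thus ?case using zero_mem modular_zero by simp
next
  case (Suc L y)
  define K where "K = 2 powr (p + 1)"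
  have IH: "(\<lambda>k. \<Sum>n<L. y (Suc n) k) \<in> E \<and>
      \<Phi> (\<lambda>k. \<Sum>n<L. y (Suc n) k) \<le> (\<Sum>n<L. K ^ (n + 1) * \<Phi> (y (Suc n)))"
    using Suc.IH[of "\<lambda>n. y (Suc n)"] Suc.prems unfolding K_def by auto
  have eq: "(\<lambda>k. \<Sum>n<Suc L. y n k) = (\<lambda>k. y 0 k + (\<Sum>n<L. y (Suc n) k))"
    by (rule ext, subst sum.lessThan_Suc_shift, simp)
  have q: "(\<lambda>k. y 0 k + (\<Sum>n<L. y (Suc n) k)) \<in> E \<and>
      \<Phi> (\<lambda>k. y 0 k + (\<Sum>n<L. y (Suc n) k)) \<le> K * (\<Phi> (y 0) + \<Phi> (\<lambda>k. \<Sum>n<L. y (Suc n) k))"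
    using quasi_triangle[OF _ IH[THEN conjunct1]] Suc.prems unfolding K_def by simp
  have "K * (\<Phi> (y 0) + \<Phi> (\<lambda>k. \<Sum>n<L. y (Suc n) k))
      \<le> K * (\<Phi> (y 0) + (\<Sum>n<L. K ^ (n + 1) * \<Phi> (y (Suc n))))"
    using IH by (intro mult_left_mono) (auto simp: K_def)
  also have "\<dots> = (\<Sum>n<Suc L. K ^ (n + 1) * \<Phi> (y n))"
    by (subst sum.lessThan_Suc_shift) (simp add: sum_distrib_left algebra_simps)
  finally show ?case using q eq unfolding K_def by simp
qed


lemma sum_small_terms:
  assumes "\<And>n. y n \<in> E" "\<And>n. (2 powr (p + 1)) ^ (n + 1) * \<Phi> (y n) \<le> \<theta>"
  shows "(\<lambda>k. \<Sum>n<L. a n * y n k) \<in> E \<and> \<Phi> (\<lambda>k. \<Sum>n<L. a n * y n k) \<le> \<theta> * (\<Sum>n<L. \<bar>a n\<bar> powr p)"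
proof -
  have sum: "(\<lambda>k. \<Sum>n<L. a n * y n k) \<in> E \<and>
      \<Phi> (\<lambda>k. \<Sum>n<L. a n * y n k) \<le> (\<Sum>n<L. (2 powr (p + 1)) ^ (n + 1) * \<Phi> (\<lambda>k. a n * y n k))"
    using homogeneous[OF assms(1)] by (intro sum_le_geometric) blast
  have "(2 powr (p + 1)) ^ (n + 1) * \<Phi> (\<lambda>k. a n * y n k) \<le> \<theta> * \<bar>a n\<bar> powr p" for n
    using homogeneous[OF assms(1)[of n], of "a n"] mult_left_mono[OF assms(2)[of n], of "\<bar>a n\<bar> powr p"]
    by (simp add: algebra_simps)
  hence "(\<Sum>n<L. (2 powr (p + 1)) ^ (n + 1) * \<Phi> (\<lambda>k. a n * y n k)) \<le> \<theta> * (\<Sum>n<L. \<bar>a n\<bar> powr p)"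
    unfolding sum_distrib_left by (intro sum_mono)
  thus ?thesis using sum by linarith
qed

end

section \<open>Operators that are not finitely strictly singular\<close>

locale non_fss_operator = modular_space E \<Phi> p for E \<Phi> p +
  fixes w :: "nat \<Rightarrow> real" and X Y :: "(nat \<Rightarrow> real) set" and T :: "(nat \<Rightarrow> real) \<Rightarrow> nat \<Rightarrow> real"
    and \<epsilon> :: real
  assumes w: "lorentz_weight w" and X_subset: "X \<subseteq> E" and lin_X: "lin_subspace X"
    and Y_subset: "Y \<subseteq> lorentz_space w p"
    and T_bounded: "T \<in> bounded_ops (\<lambda>x. \<Phi> x powr (1/p)) (lorentz_norm w p) X Y"
    and eps_pos: "0 < \<epsilon>"
    and bounded_below_on_large_subspaces: "\<And>N. \<exists>Z. Z \<subseteq> X \<and> lin_subspace Z \<and> dim_at_least Z N \<and>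
      (\<forall>z\<in>Z. \<epsilon> * \<Phi> z powr (1/p) \<le> lorentz_norm w p (T z))"
begin

lemma target: "modular_space (lorentz_space w p) (lorentz_modular w p) p"
  using modular_space_lorentz[OF w p_ge_1] .

lemma p_pos: "0 < p"
  using p_ge_1 by simp

lemma image_mem: "x \<in> X \<Longrightarrow> T x \<in> lorentz_space w p"
  using bounded_ops_mem[OF T_bounded] Y_subset by blast

lemma modular_image_bound: "\<exists>D>0. \<forall>x\<in>X. lorentz_modular w p (T x) \<le> D * \<Phi> x"
proof -
  obtain C where C: "\<forall>x\<in>X. lorentz_norm w p (T x) \<le> C * \<Phi> x powr (1/p)"
    using bounded_ops_bound[OF T_bounded] by blast
  have "lorentz_modular w p (T x) \<le> max C 1 powr p * \<Phi> x" if x: "x \<in> X" for x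
    by (rule root_le_mult_imp_le)
      (use C x X_subset nonneg p_pos modular_space.nonneg[OF target] image_mem
        in \<open>auto simp: lorentz_norm_eq_modular\<close>)
  thus ?thesis by (intro exI[of _ "max C 1 powr p"]) auto
qed

lemma large_subspaces: "\<exists>Z. Z \<subseteq> X \<and> lin_subspace Z \<and> dim_at_least Z N \<and>
    (\<forall>z\<in>Z. \<epsilon> powr p * \<Phi> z \<le> lorentz_modular w p (T z))"
proof -
  obtain Z where Z: "Z \<subseteq> X" "lin_subspace Z" "dim_at_least Z N"
    "\<forall>z\<in>Z. \<epsilon> * \<Phi> z powr (1/p) \<le> lorentz_norm w p (T z)"
    using bounded_below_on_large_subspaces by blast
  have "\<epsilon> powr p * \<Phi> z \<le> lorentz_modular w p (T z)" if z: "z \<in> Z" for z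
    by (rule mult_root_le_imp_powr_le)
      (use Z z X_subset nonneg modular_space.nonneg[OF target] image_mem eps_pos p_pos
        in \<open>auto simp: lorentz_norm_eq_modular\<close>)
  thus ?thesis using Z by blast
qed

text \<open>Linear algebra in a subspace of dimension 2m + r on which T is bounded below: the 2m
  conditions kill the first m coordinates of z and of Tz, and the image gets r peaks.\<close>
lemma exists_vector_with_image_peaks:
  assumes "0 < r"
  shows "\<exists>z\<in>X. 0 < \<Phi> z \<and> \<epsilon> powr p * \<Phi> z \<le> lorentz_modular w p (T z)
    \<and> (\<forall>k<m. z k = 0) \<and> (\<forall>k<m. T z k = 0)
    \<and> (\<exists>s I. s > 0 \<and> finite I \<and> r \<le> card I \<and> (\<forall>k\<in>I. \<bar>T z k\<bar> = s) \<and> (\<forall>k. \<bar>T z k\<bar> \<le> s))"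
proof -
  define N where "N = 2 * m + r"
  obtain Z where Z: "Z \<subseteq> X" "lin_subspace Z" "dim_at_least Z N"
    and Zb: "\<forall>z\<in>Z. \<epsilon> powr p * \<Phi> z \<le> lorentz_modular w p (T z)" using large_subspaces by blast
  obtain f where f: "\<forall>i<N. f i \<in> Z"
    and ind: "\<forall>c::nat\<Rightarrow>real. (\<forall>k. (\<Sum>i<N. c i * f i k) = 0) \<longrightarrow> (\<forall>i<N. c i = 0)"
    using Z(3) unfolding dim_at_least_def by blast
  have fX: "\<And>i. i < N \<Longrightarrow> f i \<in> X" using f Z(1) by auto
  define h where "h = (\<lambda>i. T (f i))"
  have h0: "\<And>i. i < N \<Longrightarrow> h i \<longlonglongrightarrow> 0" unfolding h_def using image_mem[OF fX] lorentz_space_null by blast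
  define a where "a = (\<lambda>j i. if j < m then f i j else h i (j - m))"
  define comb where "comb = (\<lambda>c k. \<Sum>i<N. c i * f i k)"
  have T_comb: "T (comb c) = (\<lambda>k. \<Sum>i<N. c i * h i k)" for c
    unfolding h_def comb_def by (rule bounded_ops_sum[OF T_bounded lin_X fX])
  have comb_Z: "comb c \<in> Z" for c unfolding comb_def
    by (rule lin_subspace_sum[OF Z(2)]) (use f in auto)
  have comb_pos: "0 < \<Phi> (comb c)" if c: "\<exists>i<N. c i \<noteq> 0" for c
  proof -
    obtain k where "comb c k \<noteq> 0" using ind c unfolding comb_def by blast
    thus ?thesis using modular_pos comb_Z Z(1) X_subset by blast
  qed
  have image_nonzero: "\<exists>k. (\<Sum>i<N. c i * h i k) \<noteq> 0" if "\<exists>i<N. c i \<noteq> 0" for c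
  proof (rule ccontr)
    assume "\<not> ?thesis"
    hence "T (comb c) = (\<lambda>k. 0)" unfolding T_comb by auto
    hence zero: "lorentz_modular w p (T (comb c)) = 0" using modular_space.modular_zero[OF target]
      by simp
    have "0 < \<epsilon> powr p * \<Phi> (comb c)" using comb_pos[OF that] eps_pos by simp
    also have "\<dots> \<le> lorentz_modular w p (T (comb c))" using Zb comb_Z by blast
    finally show False using zero by simp
  qed
  obtain c s I where con: "\<forall>j<2*m. (\<Sum>i<N. a j i * c i) = 0" and cnz: "\<exists>i<N. c i \<noteq> 0"
    and peaks: "s > 0" "finite I" "r \<le> card I" "\<forall>k\<in>I. \<bar>\<Sum>i<N. c i * h i k\<bar> = s"
      "\<forall>k. \<bar>\<Sum>i<N. c i * h i k\<bar> \<le> s"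
    using exists_lin_comb_with_peaks[where h=h and n=N and q="2*m" and a=a and r=r, OF h0 image_nonzero]
      assms by (auto simp: N_def)
  have "comb c k = 0" if "k < m" for k
    using con[rule_format, of k] that unfolding comb_def a_def by (simp add: mult.commute)
  moreover have "T (comb c) k = 0" if "k < m" for k
    using con[rule_format, of "k + m"] that unfolding T_comb a_def by (simp add: mult.commute)
  moreover have "comb c \<in> X" "\<epsilon> powr p * \<Phi> (comb c) \<le> lorentz_modular w p (T (comb c))"
    using comb_Z Z(1) Zb by auto
  ultimately show ?thesis
    using comb_pos[OF cnz] peaks by (intro bexI[of _ "comb c"]) (auto simp: T_comb)
qed

lemma normalize_vector:
  assumes z: "z \<in> X" "0 < \<Phi> z" "\<epsilon> powr p * \<Phi> z \<le> lorentz_modular w p (T z)"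
    "\<forall>k<m. z k = 0" "\<forall>k<m. T z k = 0"
    and small: "\<And>k. \<bar>T z k\<bar> powr p \<le> \<delta> * \<Phi> z"
  shows "\<exists>z\<in>X. \<Phi> z = 1 \<and> (\<forall>k<m. z k = 0) \<and> (\<forall>k<m. T z k = 0) \<and> (\<forall>k. \<bar>T z k\<bar> powr p \<le> \<delta>)
           \<and> \<epsilon> powr p \<le> lorentz_modular w p (T z)"
proof -
  define \<mu> where "\<mu> = \<Phi> z powr (-1/p)"
  have \<mu>0: "0 < \<mu>" unfolding \<mu>_def using z(2) by simp
  have "\<mu> powr p = \<Phi> z powr ((-1/p) * p)" unfolding \<mu>_def by (simp add: powr_powr)
  also have "\<dots> = 1 / \<Phi> z" using p_pos z(2) by (simp add: powr_minus divide_inverse)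
  finally have \<mu>p: "\<mu> powr p * \<Phi> z = 1" using z(2) by simp
  define z' where "z' = (\<lambda>k. \<mu> * z k)"
  have Tz': "T z' = (\<lambda>k. \<mu> * T z k)" unfolding z'_def by (rule bounded_ops_scale[OF T_bounded z(1)])
  have "\<bar>T z' k\<bar> powr p \<le> \<delta>" for k
  proof -
    have "\<bar>T z' k\<bar> powr p = \<mu> powr p * \<bar>T z k\<bar> powr p" unfolding Tz' using \<mu>0
      by (simp add: abs_mult powr_mult)
    also have "\<dots> \<le> \<mu> powr p * (\<delta> * \<Phi> z)" by (rule mult_left_mono[OF small]) simp
    finally show ?thesis using \<mu>p by (simp add: algebra_simps)
  qed
  moreover have "\<epsilon> powr p \<le> lorentz_modular w p (T z')"
  proof -
    have "\<epsilon> powr p = \<mu> powr p * (\<epsilon> powr p * \<Phi> z)"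
      using \<mu>p by (metis mult.left_commute mult_1_right)
    also have "\<dots> \<le> \<mu> powr p * lorentz_modular w p (T z)" by (rule mult_left_mono[OF z(3)]) simp
    also have "\<dots> = lorentz_modular w p (T z')"
      unfolding Tz' using modular_space.homogeneous[OF target image_mem[OF z(1)]] \<mu>0 by simp
    finally show ?thesis .
  qed
  moreover have "z' \<in> X" "\<Phi> z' = 1"
    using lin_subspace_scale[OF lin_X z(1)] homogeneous[of z \<mu>] z(1) X_subset \<mu>0 \<mu>p
    by (auto simp: z'_def)
  moreover have "\<forall>k<m. z' k = 0" "\<forall>k<m. T z' k = 0" using z(4,5) Tz' by (simp_all add: z'_def)
  ultimately show ?thesis by blast
qed

text \<open>Non-summability of the weights turns r equal peaks into a uniform bound on the coordinates of
  the image.\<close>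
lemma exists_flat_normalized_vector:
  assumes \<delta>: "0 < \<delta>"
  shows "\<exists>z\<in>X. \<Phi> z = 1 \<and> (\<forall>k<m. z k = 0) \<and> (\<forall>k<m. T z k = 0) \<and> (\<forall>k. \<bar>T z k\<bar> powr p \<le> \<delta>)
           \<and> \<epsilon> powr p \<le> lorentz_modular w p (T z)"
proof -
  obtain D where D: "D > 0" "\<forall>x\<in>X. lorentz_modular w p (T x) \<le> D * \<Phi> x"
    using modular_image_bound by blast
  obtain r where r: "D / \<delta> < (\<Sum>j<r. w j)" using lorentz_weight_partial_sums_unbounded[OF w] by blast
  have "0 < D / \<delta>" using D \<delta> by simp
  hence "0 < r" using r by (cases r) auto
  obtain z where z: "z \<in> X" "0 < \<Phi> z" "\<epsilon> powr p * \<Phi> z \<le> lorentz_modular w p (T z)"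
    "\<forall>k<m. z k = 0" "\<forall>k<m. T z k = 0"
    and "\<exists>s I. s > 0 \<and> finite I \<and> r \<le> card I \<and> (\<forall>k\<in>I. \<bar>T z k\<bar> = s) \<and> (\<forall>k. \<bar>T z k\<bar> \<le> s)"
    using exists_vector_with_image_peaks[OF \<open>0 < r\<close>, where m=m] by blast
  then obtain s I where s: "s > 0" and I: "finite I" "r \<le> card I" "\<forall>k\<in>I. \<bar>T z k\<bar> = s"
    and ub: "\<forall>k. \<bar>T z k\<bar> \<le> s"
    by blast
  have "s powr p * (\<Sum>j<r. w j) \<le> lorentz_modular w p (T z)"
    by (rule lorentz_modular_ge_peaks[OF w p_pos image_mem[OF z(1)] I(1,2)]) (use s I(3) in auto)
  also have "\<dots> \<le> D * \<Phi> z" using D z(1) by blast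
  finally have "s powr p * (D / \<delta>) \<le> D * \<Phi> z"
    using mult_left_mono[OF less_imp_le[OF r], of "s powr p"] by simp
  hence "s powr p \<le> \<delta> * \<Phi> z" using \<delta> D by (simp add: field_simps)
  moreover have "\<bar>T z k\<bar> powr p \<le> s powr p" for k using ub p_pos by (intro powr_mono2) auto
  ultimately show ?thesis using z by (intro normalize_vector) (auto intro: order_trans)
qed

subsection \<open>The gliding hump\<close>

text \<open>
  K is the constant of the quasi-triangle inequality. The tails cut off the n-th hump have size
  at most eta n, which pays for the factor K^(n+1) lost when summing them; delta m bounds the
  coordinates of the image of a hump starting at m, so that shifting its weights by m costs at most
  eps_p / (4 K).
\<close>
definition "K = 2 powr (p + 1)"
definition "eps_p = \<epsilon> powr p"
definition "theta = min 1 (eps_p / (4 * K^2))"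
definition "eta n = theta / (K^(n+1) * 2^(n+1))"
definition "delta m = eps_p / (4 * K * (real m + 1))"

lemma four_le_K: "4 \<le> K" unfolding K_def by (rule four_le_two_powr_Suc)
lemma eps_p_pos: "0 < eps_p" unfolding eps_p_def using eps_pos by simp
lemma theta_pos: "0 < theta" unfolding theta_def using eps_p_pos four_le_K by simp
lemma theta_le: "theta \<le> 1" "theta \<le> eps_p / (4 * K^2)" unfolding theta_def by auto
lemma eta_pos: "0 < eta n" unfolding eta_def using theta_pos four_le_K by simp
lemma eta_le_theta: "eta n \<le> theta"
proof -
  have a: "1 \<le> K^(n+1)" using four_le_K by (intro one_le_power) simp
  have b: "1 \<le> (2::real)^(n+1)" by (intro one_le_power) simp
  have "1 * 1 \<le> K^(n+1) * 2^(n+1)" by (rule mult_mono) (use a b in auto)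
  hence "1 \<le> K^(n+1) * 2^(n+1)" by simp
  thus ?thesis unfolding eta_def using theta_pos by (simp add: divide_le_eq mult_le_cancel_left1)
qed
lemma delta_pos: "0 < delta m" unfolding delta_def using eps_p_pos four_le_K by simp
lemma delta_sum_le: "real m * delta m \<le> eps_p / (4 * K)"
proof -
  have "real m * delta m = eps_p / (4 * K) * (real m / (real m + 1))" unfolding delta_def
    by (simp add: field_simps)
  also have "\<dots> \<le> eps_p / (4 * K) * 1" by (rule mult_left_mono) (use eps_p_pos four_le_K in auto)
  finally show ?thesis by simp
qed

definition "hump_candidate n m z M \<longleftrightarrow> z \<in> X \<and> \<Phi> z = 1 \<and> (\<forall>k<m. z k = 0) \<and> (\<forall>k<m. T z k = 0)
   \<and> (\<forall>k. \<bar>T z k\<bar> powr p \<le> delta m) \<and> eps_p \<le> lorentz_modular w p (T z) \<and> m < M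
   \<and> \<Phi> (tail_from M z) \<le> eta n \<and> lorentz_modular w p (tail_from M (T z)) \<le> eta n"

lemma hump_candidate_exists: "\<exists>z M. hump_candidate n m z M"
proof -
  obtain z where z: "z \<in> X" "\<Phi> z = 1" "\<forall>k<m. z k = 0" "\<forall>k<m. T z k = 0" "\<forall>k. \<bar>T z k\<bar> powr p
      \<le> delta m"
    "\<epsilon> powr p \<le> lorentz_modular w p (T z)" using exists_flat_normalized_vector[OF delta_pos, of m]
      by blast
  have zE: "z \<in> E" using z(1) X_subset by auto
  have t1: "(\<lambda>M. \<Phi> (tail_from M z)) \<longlonglongrightarrow> 0" by (rule tail_tendsto_0[OF zE])
  have t2: "(\<lambda>M. lorentz_modular w p (tail_from M (T z))) \<longlonglongrightarrow> 0"
    by (rule modular_space.tail_tendsto_0[OF target image_mem[OF z(1)]])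
  have "eventually (\<lambda>M. \<Phi> (tail_from M z) < eta n) sequentially"
    using order_tendstoD(2)[OF t1 eta_pos] .
  moreover have "eventually (\<lambda>M. lorentz_modular w p (tail_from M (T z)) < eta n) sequentially"
    using order_tendstoD(2)[OF t2 eta_pos] .
  ultimately have "eventually (\<lambda>M. \<Phi> (tail_from M z) < eta n
      \<and> lorentz_modular w p (tail_from M (T z)) < eta n) sequentially"
    by (rule eventually_conj)
  then obtain M0 where M0: "\<And>M. M \<ge> M0 \<Longrightarrow> \<Phi> (tail_from M z) < eta n
      \<and> lorentz_modular w p (tail_from M (T z)) < eta n"
    unfolding eventually_sequentially by blast
  define M where "M = max M0 (Suc m)"
  have "hump_candidate n m z M" unfolding hump_candidate_def using z M0[of M]
    by (auto simp: M_def eps_p_def)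
  thus ?thesis by blast
qed

definition "hump_choice n m = (SOME zM. hump_candidate n m (fst zM) (snd zM))"

lemma hump_choice: "hump_candidate n m (fst (hump_choice n m)) (snd (hump_choice n m))"
proof -
  obtain z M where "hump_candidate n m z M" using hump_candidate_exists by blast
  hence "\<exists>zM. hump_candidate n m (fst zM) (snd zM)" by (intro exI[of _ "(z, M)"]) simp
  thus ?thesis unfolding hump_choice_def by (rule someI_ex)
qed

primrec hump_start :: "nat \<Rightarrow> nat" where
  "hump_start 0 = 0"
| "hump_start (Suc n) = snd (hump_choice n (hump_start n))"

definition "hump n = fst (hump_choice n (hump_start n))"

lemma hump_is_candidate: "hump_candidate n (hump_start n) (hump n) (hump_start (Suc n))"
  unfolding hump_def using hump_choice[of n "hump_start n"] by simp

lemma hump_mem: "hump n \<in> X" and hump_mem_E: "hump n \<in> E" and hump_modular: "\<Phi> (hump n) = 1"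
  and hump_vanishes: "k < hump_start n \<Longrightarrow> hump n k = 0"
    and image_hump_vanishes: "k < hump_start n \<Longrightarrow> T (hump n) k = 0"
  and image_hump_small: "\<bar>T (hump n) k\<bar> powr p \<le> delta (hump_start n)"
    and image_hump_large: "eps_p \<le> lorentz_modular w p (T (hump n))"
  and hump_start_less: "hump_start n < hump_start (Suc n)"
  and hump_tail_small: "\<Phi> (tail_from (hump_start (Suc n)) (hump n)) \<le> eta n"
    and image_hump_tail_small: "lorentz_modular w p (tail_from (hump_start (Suc n)) (T (hump n)))
      \<le> eta n"
  using hump_is_candidate[of n] X_subset unfolding hump_candidate_def by auto

lemma hump_start_mono: "i \<le> j \<Longrightarrow> hump_start i \<le> hump_start j"
proof (rule lift_Suc_mono_le[of hump_start])
  show "\<And>n. hump_start n \<le> hump_start (Suc n)" using hump_start_less less_imp_le by blast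
qed

lemma image_hump_mem: "T (hump n) \<in> lorentz_space w p" by (rule image_mem[OF hump_mem])


definition "hump_head n = (\<lambda>k. if k < hump_start (Suc n) then hump n k else 0)"
definition "image_head n = (\<lambda>k. if k < hump_start (Suc n) then T (hump n) k else 0)"

lemma hump_head_support: "k \<notin> {hump_start n..<hump_start (Suc n)} \<Longrightarrow> hump_head n k = 0"
  and image_head_support: "k \<notin> {hump_start n..<hump_start (Suc n)} \<Longrightarrow> image_head n k = 0"
  using hump_vanishes[of k n] image_hump_vanishes[of k n]
  by (auto simp: hump_head_def image_head_def not_le)

lemma heads_vanish_beyond:
  "hump_start L \<le> k \<Longrightarrow> n < L \<Longrightarrow> hump_head n k = 0 \<and> image_head n k = 0"
  using hump_start_mono[of "Suc n" L] by (auto simp: hump_head_def image_head_def)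

lemma image_head_small: "\<bar>image_head n k\<bar> powr p \<le> delta (hump_start n)"
  using image_hump_small[of n k] delta_pos[of "hump_start n"] by (simp add: image_head_def)

lemma hump_head_mem: "hump_head n \<in> E \<and> \<Phi> (hump_head n) \<le> 1"
proof -
  have le: "\<And>k. \<bar>hump_head n k\<bar> \<le> \<bar>hump n k\<bar>" by (simp add: hump_head_def)
  show ?thesis using solid[OF hump_mem_E[of n] le] hump_modular[of n] by simp
qed

lemma image_head_mem: "image_head n \<in> lorentz_space w p \<and> lorentz_modular w p (image_head n)
    \<le> lorentz_modular w p (T (hump n))"
proof -
  have le: "\<And>k. \<bar>image_head n k\<bar> \<le> \<bar>T (hump n) k\<bar>" by (simp add: image_head_def)
  show ?thesis using modular_space.solid[OF target image_hump_mem[of n] le] by simp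
qed

lemma hump_tail_mem: "tail_from (hump_start (Suc n)) (hump n) \<in> E"
proof -
  have le: "\<And>k. \<bar>tail_from (hump_start (Suc n)) (hump n) k\<bar> \<le> \<bar>hump n k\<bar>"
    by (simp add: tail_from_def)
  show ?thesis using solid[OF hump_mem_E[of n] le] by simp
qed
lemma image_hump_tail_mem: "tail_from (hump_start (Suc n)) (T (hump n)) \<in> lorentz_space w p"
proof -
  have le: "\<And>k. \<bar>tail_from (hump_start (Suc n)) (T (hump n)) k\<bar> \<le> \<bar>T (hump n) k\<bar>"
    by (simp add: tail_from_def)
  show ?thesis using modular_space.solid[OF target image_hump_mem[of n] le] by simp
qed

lemma hump_split: "hump n k = hump_head n k + tail_from (hump_start (Suc n)) (hump n) k"
  unfolding hump_head_def tail_from_def by auto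
lemma image_hump_split: "T (hump n) k = image_head n k
    + tail_from (hump_start (Suc n)) (T (hump n)) k" unfolding image_head_def tail_from_def by auto

lemma image_head_large: "eps_p / (2 * K)
    \<le> lorentz_modular w p (image_head n) - real (hump_start n) * delta (hump_start n)"
proof -
  have "eps_p \<le> lorentz_modular w p (T (hump n))" by (rule image_hump_large)
  also have "T (hump n) = (\<lambda>k. image_head n k + tail_from (hump_start (Suc n)) (T (hump n)) k)"
    using image_hump_split by auto
  also have "lorentz_modular w p \<dots>
      \<le> K * (lorentz_modular w p (image_head n)
        + lorentz_modular w p (tail_from (hump_start (Suc n)) (T (hump n))))"
    using modular_space.quasi_triangle[OF target image_head_mem[THEN conjunct1] image_hump_tail_mem]
      unfolding K_def by blast
  also have "\<dots> \<le> K * (lorentz_modular w p (image_head n) + eta n)"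
    using image_hump_tail_small four_le_K by (intro mult_left_mono) auto
  finally have a: "eps_p \<le> K * (lorentz_modular w p (image_head n) + eta n)" .
  have "eta n \<le> eps_p / (4 * K^2)" using eta_le_theta[of n] theta_le by linarith
  also have "\<dots> \<le> eps_p / (4 * K)" using four_le_K eps_p_pos
    by (intro divide_left_mono) (auto simp: power2_eq_square)
  finally have b: "eta n \<le> eps_p / (4 * K)" .
  have c: "real (hump_start n) * delta (hump_start n) \<le> eps_p / (4 * K)" by (rule delta_sum_le)
  from a have "eps_p / K \<le> lorentz_modular w p (image_head n) + eta n" using four_le_K
    by (simp add: divide_le_eq mult.commute)
  thus ?thesis using b c four_le_K by (simp add: field_simps)
qed

lemma hump_heads_upper:
  "(\<lambda>k. \<Sum>n<L. a n * hump_head n k) \<in> E \<and> \<Phi> (\<lambda>k. \<Sum>n<L. a n * hump_head n k) \<le> (\<Sum>n<L. \<bar>a n\<bar> powr p)"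
proof (induction L)
  case 0 thus ?case using zero_mem modular_zero by simp
next
  case (Suc L)
  define F where "F = (\<lambda>k. \<Sum>n<L. a n * hump_head n k)"
  define c where "c = (\<lambda>k. a L * hump_head L k)"
  have FE: "F \<in> E" using Suc F_def by simp
  have cE: "c \<in> E" and cP: "\<Phi> c = \<bar>a L\<bar> powr p * \<Phi> (hump_head L)"
    using homogeneous[OF hump_head_mem[THEN conjunct1]] by (auto simp: c_def)
  have Fz: "F k = 0" if "k \<notin> {..<hump_start L}" for k
    using that heads_vanish_beyond[of L k] by (simp add: F_def not_less)
  have cz: "c k = 0" if "k \<notin> {..<hump_start (Suc L)}" for k
    using that hump_head_support by (simp add: c_def)
  have d: "F k = 0 \<or> c k = 0" for k
    using Fz hump_head_support[of k L] by (cases "k < hump_start L") (auto simp: c_def)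
  have "\<Phi> (\<lambda>k. F k + c k) \<le> \<Phi> F + \<Phi> c"
    by (rule disjoint_add_le[where Sx="{..<hump_start L}" and Sy="{..<hump_start (Suc L)}",
        OF FE cE _ Fz _ cz d]) auto
  also have "\<dots> \<le> (\<Sum>n<L. \<bar>a n\<bar> powr p) + \<bar>a L\<bar> powr p"
    using Suc hump_head_mem[of L] nonneg[of "hump_head L"] unfolding cP F_def
      by (intro add_mono mult_right_le_one_le) auto
  finally have "\<Phi> (\<lambda>k. F k + c k) \<le> (\<Sum>n<Suc L. \<bar>a n\<bar> powr p)" by simp
  moreover have "(\<lambda>k. F k + c k) \<in> E" using quasi_triangle[OF FE cE] by simp
  moreover have "(\<lambda>k. \<Sum>n<Suc L. a n * hump_head n k) = (\<lambda>k. F k + c k)" by (simp add: F_def c_def)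
  ultimately show ?case by simp
qed

lemma image_heads_lower:
  "(\<lambda>k. \<Sum>n<L. a n * image_head n k) \<in> lorentz_space w p \<and>
     (\<Sum>n<L. \<bar>a n\<bar> powr p) * (eps_p / (2 * K)) \<le> lorentz_modular w p (\<lambda>k. \<Sum>n<L. a n * image_head n k)"
proof (induction L)
  case 0 thus ?case using modular_space.zero_mem[OF target] modular_space.modular_zero[OF target]
    by simp
next
  case (Suc L)
  define F where "F = (\<lambda>k. \<Sum>n<L. a n * image_head n k)"
  define c where "c = (\<lambda>k. a L * image_head L k)"
  have FL: "F \<in> lorentz_space w p" using Suc F_def by simp
  have cL: "c \<in> lorentz_space w p"
    and cP: "lorentz_modular w p c = \<bar>a L\<bar> powr p * lorentz_modular w p (image_head L)"
    using modular_space.homogeneous[OF target image_head_mem[THEN conjunct1]] by (auto simp: c_def)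
  have Fz: "F k = 0" if "k \<notin> {..<hump_start L}" for k
    using that heads_vanish_beyond[of L k] by (simp add: F_def not_less)
  have cz: "c k = 0" if "k \<notin> {hump_start L..<hump_start (Suc L)}" for k
    using that image_head_support by (simp add: c_def)
  have cs: "\<bar>c k\<bar> powr p \<le> \<bar>a L\<bar> powr p * delta (hump_start L)" for k
    using image_head_small[of L k] by (simp add: c_def abs_mult powr_mult mult_left_mono)
  have "lorentz_modular w p F + lorentz_modular w p c
      - real (hump_start L) * (\<bar>a L\<bar> powr p * delta (hump_start L))
      \<le> lorentz_modular w p (\<lambda>k. F k + c k)"
    by (rule lorentz_modular_add_shifted_block_ge[where Sx="{..<hump_start L}"
        and Sy="{hump_start L..<hump_start (Suc L)}" and m="hump_start L",
        OF w p_pos _ _ Fz _ _ cz cs]) auto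
  moreover have "\<bar>a L\<bar> powr p * (eps_p / (2 * K))
      \<le> lorentz_modular w p c - real (hump_start L) * (\<bar>a L\<bar> powr p * delta (hump_start L))"
  proof -
    have "\<bar>a L\<bar> powr p * (eps_p / (2 * K))
        \<le> \<bar>a L\<bar> powr p
          * (lorentz_modular w p (image_head L) - real (hump_start L) * delta (hump_start L))"
      by (rule mult_left_mono[OF image_head_large]) simp
    thus ?thesis unfolding cP by (simp add: algebra_simps)
  qed
  ultimately have "(\<Sum>n<Suc L. \<bar>a n\<bar> powr p) * (eps_p / (2 * K))
      \<le> lorentz_modular w p (\<lambda>k. F k + c k)"
    using Suc F_def by (simp add: algebra_simps)
  moreover have "(\<lambda>k. F k + c k) \<in> lorentz_space w p"
    using modular_space.quasi_triangle[OF target FL cL] by simp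
  moreover have "(\<lambda>k. \<Sum>n<Suc L. a n * image_head n k) = (\<lambda>k. F k + c k)" by (simp add: F_def c_def)
  ultimately show ?case by simp
qed

lemma K_pow_eta_le: "K ^ (n+1) * eta n \<le> theta"
proof -
  have "K ^ (n+1) * eta n = theta / 2^(n+1)" unfolding eta_def using four_le_K
    by (simp add: field_simps)
  also have "\<dots> \<le> theta"
  proof -
    have "1 \<le> (2::real)^(n+1)" by (rule one_le_power) simp
    hence "theta * 1 \<le> theta * 2^(n+1)" using theta_pos by (intro mult_left_mono) auto
    thus ?thesis by (simp add: divide_le_eq)
  qed
  finally show ?thesis .
qed

lemma hump_tails_small:
  "(\<lambda>k. \<Sum>n<L. a n * tail_from (hump_start (Suc n)) (hump n) k) \<in> E \<and>
    \<Phi> (\<lambda>k. \<Sum>n<L. a n * tail_from (hump_start (Suc n)) (hump n) k) \<le> theta * (\<Sum>n<L. \<bar>a n\<bar> powr p)"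
  using hump_tail_mem order_trans[OF mult_left_mono[OF hump_tail_small] K_pow_eta_le[unfolded K_def]]
  by (intro sum_small_terms) auto

lemma image_hump_tails_small:
  "(\<lambda>k. \<Sum>n<L. a n * tail_from (hump_start (Suc n)) (T (hump n)) k) \<in> lorentz_space w p \<and>
    lorentz_modular w p (\<lambda>k. \<Sum>n<L. a n * tail_from (hump_start (Suc n)) (T (hump n)) k)
      \<le> theta * (\<Sum>n<L. \<bar>a n\<bar> powr p)"
  using image_hump_tail_mem
    order_trans[OF mult_left_mono[OF image_hump_tail_small] K_pow_eta_le[unfolded K_def]]
  by (intro modular_space.sum_small_terms[OF target]) auto

lemma hump_comb_upper: "\<Phi> (\<lambda>k. \<Sum>n<L. a n * hump n k) \<le> 2 * K * (\<Sum>n<L. \<bar>a n\<bar> powr p)"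
proof -
  define A where "A = (\<Sum>n<L. \<bar>a n\<bar> powr p)"
  define B where "B = (\<lambda>k. \<Sum>n<L. a n * hump_head n k)"
  define R where "R = (\<lambda>k. \<Sum>n<L. a n * tail_from (hump_start (Suc n)) (hump n) k)"
  have split: "(\<lambda>k. \<Sum>n<L. a n * hump n k) = (\<lambda>k. B k + R k)"
    unfolding B_def R_def by (subst hump_split) (simp add: distrib_left sum.distrib)
  have B: "B \<in> E" "\<Phi> B \<le> A" using hump_heads_upper[where L=L and a=a] unfolding B_def A_def by auto
  have R: "R \<in> E" "\<Phi> R \<le> theta * A" using hump_tails_small[where L=L and a=a] unfolding R_def A_def
    by auto
  have "\<Phi> (\<lambda>k. B k + R k) \<le> K * (\<Phi> B + \<Phi> R)"
    using quasi_triangle[OF B(1) R(1)] unfolding K_def by blast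
  also have "\<dots> \<le> K * (A + theta * A)"
    using B R four_le_K by (intro mult_left_mono add_mono) auto
  also have "\<dots> \<le> K * (2 * A)"
    using theta_le(1) four_le_K mult_right_mono[of theta 1 A] by (simp add: A_def sum_nonneg)
  finally show ?thesis unfolding split A_def by simp
qed

lemma image_hump_comb_lower:
  "(\<Sum>n<L. \<bar>a n\<bar> powr p) * eps_p \<le> 4 * K^2 * lorentz_modular w p (T (\<lambda>k. \<Sum>n<L. a n * hump n k))"
proof -
  define A where "A = (\<Sum>n<L. \<bar>a n\<bar> powr p)"
  define x where "x = (\<lambda>k. \<Sum>n<L. a n * hump n k)"
  define U where "U = (\<lambda>k. \<Sum>n<L. a n * image_head n k)"
  define R where "R = (\<lambda>k. \<Sum>n<L. a n * tail_from (hump_start (Suc n)) (T (hump n)) k)"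
  have A0: "0 \<le> A" unfolding A_def by (simp add: sum_nonneg)
  have Tx: "T x = (\<lambda>k. \<Sum>n<L. a n * T (hump n) k)"
    unfolding x_def by (rule bounded_ops_sum[OF T_bounded lin_X hump_mem])
  have U: "U \<in> lorentz_space w p" "A * (eps_p / (2 * K)) \<le> lorentz_modular w p U"
    using image_heads_lower[where L=L and a=a] unfolding U_def A_def by auto
  have R: "R \<in> lorentz_space w p" "lorentz_modular w p R \<le> theta * A"
    using image_hump_tails_small[where L=L and a=a] unfolding R_def A_def by auto
  have split: "U = (\<lambda>k. T x k + - R k)"
  proof (rule ext)
    fix k
    have "(\<Sum>n<L. a n * T (hump n) k)
        = (\<Sum>n<L. a n * image_head n k + a n * tail_from (hump_start (Suc n)) (T (hump n)) k)"
      by (rule sum.cong[OF refl]) (subst image_hump_split, simp add: distrib_left)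
    thus "U k = T x k + - R k" unfolding U_def R_def Tx by (simp add: sum.distrib)
  qed
  have minus_R: "(\<lambda>k. - R k) \<in> lorentz_space w p" "lorentz_modular w p (\<lambda>k. - R k)
      = lorentz_modular w p R"
    using modular_space.minus_mem[OF target R(1)] by auto
  have "x \<in> X" unfolding x_def using lin_subspace_sum[OF lin_X, where f=hump] hump_mem by blast
  hence "lorentz_modular w p U \<le> K * (lorentz_modular w p (T x) + lorentz_modular w p (\<lambda>k. - R k))"
    using modular_space.quasi_triangle[OF target image_mem minus_R(1)] unfolding split K_def
      by blast
  hence "A * (eps_p / (2 * K)) \<le> K * (lorentz_modular w p (T x) + lorentz_modular w p (\<lambda>k. - R k))"
    using U(2) by linarith
  also have "\<dots> \<le> K * lorentz_modular w p (T x) + K * theta * A"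
    using minus_R R four_le_K by (simp add: distrib_left)
  also have "K * theta * A \<le> eps_p / (4 * K) * A"
  proof (rule mult_right_mono[OF _ A0])
    have "K * theta \<le> K * (eps_p / (4 * K^2))" using theta_le four_le_K
      by (intro mult_left_mono) auto
    thus "K * theta \<le> eps_p / (4 * K)" using four_le_K by (simp add: power2_eq_square field_simps)
  qed
  finally have "A * (eps_p / (4 * K)) \<le> K * lorentz_modular w p (T x)" by (simp add: field_simps)
  thus ?thesis using four_le_K unfolding A_def x_def by (simp add: field_simps power2_eq_square)
qed

definition "hump_span = {x. \<exists>L a. x = (\<lambda>k. \<Sum>n<L. a n * hump n k)}"

lemma hump_spanI: "x = (\<lambda>k. \<Sum>n<L. a n * hump n k) \<Longrightarrow> x \<in> hump_span"
  unfolding hump_span_def by blast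

lemma hump_span_mem: "x \<in> hump_span \<Longrightarrow> x \<in> X"
  unfolding hump_span_def using lin_subspace_sum[OF lin_X, where f=hump] hump_mem by blast

lemma hump_comb_pad: "L \<le> M \<Longrightarrow> (\<lambda>k. \<Sum>n<L. a n * hump n k)
    = (\<lambda>k. \<Sum>n<M. (if n < L then a n else 0) * hump n k)"
proof (rule ext)
  fix k assume "L \<le> M"
  have "(\<Sum>n<M. (if n < L then a n else 0) * hump n k)
      = (\<Sum>n<L. (if n < L then a n else 0) * hump n k)"
    by (rule sum.mono_neutral_right) (use \<open>L \<le> M\<close> in auto)
  thus "(\<Sum>n<L. a n * hump n k) = (\<Sum>n<M. (if n < L then a n else 0) * hump n k)" by simp
qed

lemma hump_span_add: "x \<in> hump_span \<Longrightarrow> y \<in> hump_span \<Longrightarrow> (\<lambda>k. x k + y k) \<in> hump_span"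
proof -
  assume "x \<in> hump_span" "y \<in> hump_span"
  then obtain L1 a1 L2 a2 where x: "x = (\<lambda>k. \<Sum>n<L1. a1 n * hump n k)"
    and y: "y = (\<lambda>k. \<Sum>n<L2. a2 n * hump n k)"
    unfolding hump_span_def by blast
  define M where "M = max L1 L2"
  have x': "x = (\<lambda>k. \<Sum>n<M. (if n < L1 then a1 n else 0) * hump n k)" unfolding x
    by (rule hump_comb_pad) (simp add: M_def)
  have y': "y = (\<lambda>k. \<Sum>n<M. (if n < L2 then a2 n else 0) * hump n k)" unfolding y
    by (rule hump_comb_pad) (simp add: M_def)
  have "(\<lambda>k. x k + y k)
      = (\<lambda>k. \<Sum>n<M. ((if n < L1 then a1 n else 0) + (if n < L2 then a2 n else 0)) * hump n k)"
    unfolding x' y' by (rule ext) (simp add: sum.distrib[symmetric] algebra_simps)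
  thus ?thesis by (rule hump_spanI)
qed

lemma hump_span_scale: "x \<in> hump_span \<Longrightarrow> (\<lambda>k. c * x k) \<in> hump_span"
proof -
  assume "x \<in> hump_span"
  then obtain L a where x: "x = (\<lambda>k. \<Sum>n<L. a n * hump n k)" unfolding hump_span_def by blast
  have "(\<lambda>k. c * x k) = (\<lambda>k. \<Sum>n<L. (\<lambda>n. c * a n) n * hump n k)" unfolding x
    by (simp add: sum_distrib_left algebra_simps)
  thus ?thesis by (rule hump_spanI)
qed

lemma hump_span_zero: "(\<lambda>k. 0) \<in> hump_span"
proof -
  have "(\<lambda>k. 0::real) = (\<lambda>k. \<Sum>n<0. (\<lambda>n. 0) n * hump n k)" by simp
  thus ?thesis by (rule hump_spanI)
qed

lemma hump_mem_span: "hump i \<in> hump_span"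
proof -
  have "hump i = (\<lambda>k. \<Sum>n<Suc i. (\<lambda>n. if n = i then 1 else 0) n * hump n k)"
    by (rule ext) (simp add: if_distrib sum.delta)
  thus ?thesis by (rule hump_spanI)
qed

definition "lower_const = eps_p / (8 * K^3)"
lemma lower_const_pos: "0 < lower_const" unfolding lower_const_def using eps_p_pos four_le_K by simp

lemma hump_span_bounded_below: "x \<in> hump_span \<Longrightarrow> lower_const * \<Phi> x \<le> lorentz_modular w p (T x)"
proof -
  assume "x \<in> hump_span"
  then obtain L a where x: "x = (\<lambda>k. \<Sum>n<L. a n * hump n k)" unfolding hump_span_def by blast
  have "\<Phi> x \<le> 2 * K * (\<Sum>n<L. \<bar>a n\<bar> powr p)" unfolding x by (rule hump_comb_upper)
  also have "\<dots> \<le> 2 * K * (4 * K^2 * lorentz_modular w p (T x) / eps_p)"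
    using image_hump_comb_lower[where L=L and a=a] eps_p_pos four_le_K unfolding x
    by (intro mult_left_mono) (auto simp: le_divide_eq)
  finally show ?thesis
    unfolding lower_const_def using eps_p_pos four_le_K
    by (simp add: field_simps power2_eq_square power3_eq_cube)
qed

lemma hump_independent: "(\<forall>k. (\<Sum>i<N. c i * hump i k) = 0) \<Longrightarrow> (\<forall>i<N. c i = 0)"
proof -
  assume h: "\<forall>k. (\<Sum>i<N. c i * hump i k) = 0"
  hence x0: "(\<lambda>k. \<Sum>i<N. c i * hump i k) = (\<lambda>k. 0)" by auto
  have "(\<Sum>n<N. \<bar>c n\<bar> powr p) * eps_p \<le> 4 * K^2 * lorentz_modular w p (T (\<lambda>k. \<Sum>i<N. c i * hump i k))"
    by (rule image_hump_comb_lower)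
  also have "\<dots> = 0" unfolding x0 bounded_ops_zero[OF T_bounded lin_X]
    by (simp add: modular_space.modular_zero[OF target])
  finally have "(\<Sum>n<N. \<bar>c n\<bar> powr p) \<le> 0" using eps_p_pos by (simp add: mult_le_0_iff)
  hence "(\<Sum>n<N. \<bar>c n\<bar> powr p) = 0" by (simp add: antisym sum_nonneg)
  hence "\<forall>i\<in>{..<N}. \<bar>c i\<bar> powr p = 0" by (subst (asm) sum_nonneg_eq_0_iff) auto
  thus ?thesis by auto
qed


definition "hump_closure = {x \<in> X. \<exists>s. (\<forall>j. s j \<in> hump_span) \<and> (\<lambda>j. \<Phi> (\<lambda>k. s j k - x k)) \<longlonglongrightarrow> 0}"

lemma hump_closureI: "x \<in> X \<Longrightarrow> (\<And>j. s j \<in> hump_span) \<Longrightarrow> (\<lambda>j. \<Phi> (\<lambda>k. s j k - x k)) \<longlonglongrightarrow> 0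
    \<Longrightarrow> x \<in> hump_closure"
  unfolding hump_closure_def by blast

lemma diff_mem: "x \<in> X \<Longrightarrow> y \<in> X \<Longrightarrow> (\<lambda>k. x k - y k) \<in> E"
  using lin_subspace_diff[OF lin_X] X_subset by blast

lemma modular_diff_commute: "x \<in> X \<Longrightarrow> y \<in> X \<Longrightarrow> \<Phi> (\<lambda>k. y k - x k) = \<Phi> (\<lambda>k. x k - y k)"
proof -
  assume x: "x \<in> X" and y: "y \<in> X"
  have "\<Phi> (\<lambda>k. - (x k - y k)) = \<Phi> (\<lambda>k. x k - y k)" using minus_mem[OF diff_mem[OF x y]] by blast
  thus ?thesis by simp
qed

lemma quasi_triangle_diff: "x \<in> X \<Longrightarrow> y \<in> X \<Longrightarrow> z \<in> X \<Longrightarrow>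
   \<Phi> (\<lambda>k. x k - z k) \<le> K * (\<Phi> (\<lambda>k. x k - y k) + \<Phi> (\<lambda>k. y k - z k))"
proof -
  assume x: "x \<in> X" and y: "y \<in> X" and z: "z \<in> X"
  have "\<Phi> (\<lambda>k. (x k - y k) + (y k - z k)) \<le> K * (\<Phi> (\<lambda>k. x k - y k) + \<Phi> (\<lambda>k. y k - z k))"
    using quasi_triangle[OF diff_mem[OF x y] diff_mem[OF y z]] unfolding K_def by blast
  thus ?thesis by simp
qed

lemma hump_closure_subset: "hump_closure \<subseteq> X" unfolding hump_closure_def by auto

lemma hump_closure_zero: "(\<lambda>k. 0) \<in> hump_closure"
proof -
  have "(\<lambda>j. \<Phi> (\<lambda>k. (\<lambda>j k. 0) j k - 0)) \<longlonglongrightarrow> 0" using modular_zero by simp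
  thus ?thesis by (rule hump_closureI[OF lin_subspace_zero[OF lin_X] hump_span_zero])
qed

lemma hump_closure_add: "x \<in> hump_closure \<Longrightarrow> y \<in> hump_closure \<Longrightarrow> (\<lambda>k. x k + y k) \<in> hump_closure"
proof -
  assume "x \<in> hump_closure" "y \<in> hump_closure"
  then obtain s t where x: "x \<in> X" and y: "y \<in> X" and s: "\<forall>j. s j \<in> hump_span"
    and t: "\<forall>j. t j \<in> hump_span"
    and sl: "(\<lambda>j. \<Phi> (\<lambda>k. s j k - x k)) \<longlonglongrightarrow> 0" and tl: "(\<lambda>j. \<Phi> (\<lambda>k. t j k - y k)) \<longlonglongrightarrow> 0"
    unfolding hump_closure_def by blast
  define u where "u = (\<lambda>j k. s j k + t j k)"
  have u: "\<forall>j. u j \<in> hump_span" unfolding u_def using s t hump_span_add by blast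
  have sX: "s j \<in> X" and tX: "t j \<in> X" for j using s t hump_span_mem by auto
  have "(\<lambda>j. \<Phi> (\<lambda>k. u j k - (x k + y k))) \<longlonglongrightarrow> 0"
  proof (rule squeeze_null_seq)
    show "0 \<le> \<Phi> (\<lambda>k. u j k - (x k + y k))" for j
      using diff_mem[OF lin_subspace_add[OF lin_X sX tX] lin_subspace_add[OF lin_X x y]]
      unfolding u_def by (intro nonneg) simp
    show "\<Phi> (\<lambda>k. u j k - (x k + y k)) \<le> K * (\<Phi> (\<lambda>k. s j k - x k) + \<Phi> (\<lambda>k. t j k - y k))" for j
    proof -
      have "\<Phi> (\<lambda>k. (s j k - x k) + (t j k - y k)) \<le> K * (\<Phi> (\<lambda>k. s j k - x k) + \<Phi> (\<lambda>k. t j k - y k))"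
        using quasi_triangle[OF diff_mem[OF sX x] diff_mem[OF tX y]] unfolding K_def by blast
      thus ?thesis unfolding u_def by (simp add: algebra_simps)
    qed
    show "(\<lambda>j. K * (\<Phi> (\<lambda>k. s j k - x k) + \<Phi> (\<lambda>k. t j k - y k))) \<longlonglongrightarrow> 0"
      using tendsto_mult_right_zero[OF tendsto_add_zero[OF sl tl]] by simp
  qed
  thus ?thesis by (rule hump_closureI[OF lin_subspace_add[OF lin_X x y] u[rule_format]])
qed

lemma hump_closure_scale: "x \<in> hump_closure \<Longrightarrow> (\<lambda>k. c * x k) \<in> hump_closure"
proof -
  assume "x \<in> hump_closure"
  then obtain s where x: "x \<in> X" and s: "\<forall>j. s j \<in> hump_span"
    and sl: "(\<lambda>j. \<Phi> (\<lambda>k. s j k - x k)) \<longlonglongrightarrow> 0" unfolding hump_closure_def by blast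
  have sX: "s j \<in> X" for j using s hump_span_mem by auto
  define u where "u = (\<lambda>j k. c * s j k)"
  have u: "\<forall>j. u j \<in> hump_span" unfolding u_def using s hump_span_scale by blast
  have eq: "\<Phi> (\<lambda>k. u j k - c * x k) = \<bar>c\<bar> powr p * \<Phi> (\<lambda>k. s j k - x k)" for j
  proof -
    have "\<Phi> (\<lambda>k. c * (s j k - x k)) = \<bar>c\<bar> powr p * \<Phi> (\<lambda>k. s j k - x k)"
      using homogeneous[OF diff_mem[OF sX x]] by blast
    thus ?thesis unfolding u_def by (simp add: algebra_simps)
  qed
  have "(\<lambda>j. \<Phi> (\<lambda>k. u j k - c * x k)) \<longlonglongrightarrow> 0"
    unfolding eq using tendsto_mult_right_zero[OF sl] by simp
  thus ?thesis by (rule hump_closureI[OF lin_subspace_scale[OF lin_X x] u[rule_format]])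
qed

lemma lin_subspace_hump_closure: "lin_subspace hump_closure"
  unfolding lin_subspace_def using hump_closure_zero hump_closure_add hump_closure_scale by blast

lemma norm_closed_hump_closure: "norm_closed (\<lambda>x. \<Phi> x powr (1/p)) X hump_closure"
  unfolding norm_closed_def
proof (intro allI impI)
  fix xs x assume xs: "\<forall>n. xs n \<in> hump_closure" and x: "x \<in> X"
    and lim: "(\<lambda>n. \<Phi> (\<lambda>k. xs n k - x k) powr (1/p)) \<longlonglongrightarrow> 0"
  have xsX: "xs n \<in> X" for n using xs hump_closure_subset by auto
  have lim2: "(\<lambda>n. \<Phi> (\<lambda>k. xs n k - x k)) \<longlonglongrightarrow> 0"
  proof -
    have "(\<lambda>n. (\<Phi> (\<lambda>k. xs n k - x k) powr (1/p)) powr p) \<longlonglongrightarrow> 0"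
      by (rule tendsto_zero_powrI[OF lim tendsto_const]) (use p_pos in auto)
    moreover have "(\<Phi> (\<lambda>k. xs n k - x k) powr (1/p)) powr p = \<Phi> (\<lambda>k. xs n k - x k)" for n
      using nonneg[OF diff_mem[OF xsX x]] p_pos by (simp add: powr_powr)
    ultimately show ?thesis by simp
  qed
  have "\<forall>n. \<exists>s. s \<in> hump_span \<and> \<Phi> (\<lambda>k. s k - xs n k) < inverse (real (Suc n))"
  proof
    fix n
    obtain s where s: "\<forall>j. s j \<in> hump_span" and sl: "(\<lambda>j. \<Phi> (\<lambda>k. s j k - xs n k)) \<longlonglongrightarrow> 0"
      using xs unfolding hump_closure_def by blast
    have "eventually (\<lambda>j. \<Phi> (\<lambda>k. s j k - xs n k) < inverse (real (Suc n))) sequentially"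
      by (rule order_tendstoD(2)[OF sl]) simp
    then obtain j0 where "\<forall>j\<ge>j0. \<Phi> (\<lambda>k. s j k - xs n k) < inverse (real (Suc n))"
      unfolding eventually_sequentially by blast
    hence "\<Phi> (\<lambda>k. s j0 k - xs n k) < inverse (real (Suc n))" by simp
    thus "\<exists>s. s \<in> hump_span \<and> \<Phi> (\<lambda>k. s k - xs n k) < inverse (real (Suc n))" using s by blast
  qed
  then obtain g where g: "\<And>n. g n \<in> hump_span" "\<And>n. \<Phi> (\<lambda>k. g n k - xs n k) < inverse (real (Suc n))"
    by metis
  have gX: "g n \<in> X" for n using g hump_span_mem by auto
  have "(\<lambda>n. \<Phi> (\<lambda>k. g n k - x k)) \<longlonglongrightarrow> 0"
  proof (rule squeeze_null_seq)
    show "0 \<le> \<Phi> (\<lambda>k. g n k - x k)" for n by (rule nonneg[OF diff_mem[OF gX x]])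
    show "\<Phi> (\<lambda>k. g n k - x k) \<le> K * (inverse (real (Suc n)) + \<Phi> (\<lambda>k. xs n k - x k))" for n
    proof -
      have "\<Phi> (\<lambda>k. g n k - x k) \<le> K * (\<Phi> (\<lambda>k. g n k - xs n k) + \<Phi> (\<lambda>k. xs n k - x k))"
        by (rule quasi_triangle_diff[OF gX xsX x])
      also have "\<dots> \<le> K * (inverse (real (Suc n)) + \<Phi> (\<lambda>k. xs n k - x k))"
        using g(2)[of n] four_le_K by (intro mult_left_mono) auto
      finally show ?thesis .
    qed
    show "(\<lambda>n. K * (inverse (real (Suc n)) + \<Phi> (\<lambda>k. xs n k - x k))) \<longlonglongrightarrow> 0"
      using tendsto_mult_right_zero[OF tendsto_add_zero[OF LIMSEQ_inverse_real_of_nat lim2]] by simp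
  qed
  thus "x \<in> hump_closure" by (rule hump_closureI[OF x g(1)])
qed

lemma infinite_dimensional_hump_closure: "infinite_dimensional hump_closure"
  unfolding infinite_dimensional_def dim_at_least_def
proof (rule allI)
  fix N
  have a: "\<forall>i<N. hump i \<in> hump_closure"
  proof (intro allI impI)
    fix i
    have "(\<lambda>j. \<Phi> (\<lambda>k. (\<lambda>j. hump i) j k - hump i k)) \<longlonglongrightarrow> 0" using modular_zero by simp
    thus "hump i \<in> hump_closure" by (rule hump_closureI[OF hump_mem hump_mem_span])
  qed
  have b: "\<forall>c. (\<forall>k. (\<Sum>i<N. c i * hump i k) = 0) \<longrightarrow> (\<forall>i<N. c i = 0)" using hump_independent by blast
  show "\<exists>f. (\<forall>i<N. f i \<in> hump_closure) \<and> (\<forall>c. (\<forall>k. (\<Sum>i<N. c i * f i k) = 0) \<longrightarrow> (\<forall>i<N. c i = 0))"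
    using a b by blast
qed

lemma modular_le_near_hump_span:
  assumes z: "z \<in> X" and v: "v \<in> hump_span" and D: "\<forall>x\<in>X. lorentz_modular w p (T x) \<le> D * \<Phi> x"
  shows "\<Phi> z \<le> K^2 / lower_const * lorentz_modular w p (T z)
    + (K^2 * D / lower_const + K) * \<Phi> (\<lambda>k. v k - z k)"
proof -
  have vX: "v \<in> X" by (rule hump_span_mem[OF v])
  have dX: "(\<lambda>k. v k - z k) \<in> X" by (rule lin_subspace_diff[OF lin_X vX z])
  have "\<Phi> z \<le> K * (\<Phi> v + \<Phi> (\<lambda>k. z k - v k))"
    using quasi_triangle[OF _ diff_mem[OF z vX]] vX X_subset unfolding K_def by fastforce
  hence d1: "\<Phi> z \<le> K * (\<Phi> v + \<Phi> (\<lambda>k. v k - z k))"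
    using modular_diff_commute[OF vX z] by simp
  have "T v = (\<lambda>k. T z k + T (\<lambda>k. v k - z k) k)"
    using bounded_ops_diff[OF T_bounded lin_X vX z] by simp
  hence "lorentz_modular w p (T v)
      \<le> K * (lorentz_modular w p (T z) + lorentz_modular w p (T (\<lambda>k. v k - z k)))"
    using modular_space.quasi_triangle[OF target image_mem[OF z] image_mem[OF dX]] unfolding K_def
      by simp
  also have "\<dots> \<le> K * (lorentz_modular w p (T z) + D * \<Phi> (\<lambda>k. v k - z k))"
    using D dX four_le_K by (intro mult_left_mono add_left_mono) auto
  finally have "lower_const * \<Phi> v \<le> K * (lorentz_modular w p (T z) + D * \<Phi> (\<lambda>k. v k - z k))"
    using hump_span_bounded_below[OF v] by linarith
  hence "\<Phi> v \<le> K * (lorentz_modular w p (T z) + D * \<Phi> (\<lambda>k. v k - z k)) / lower_const"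
    using lower_const_pos by (simp add: field_simps)
  hence "\<Phi> z \<le> K * (K * (lorentz_modular w p (T z) + D * \<Phi> (\<lambda>k. v k - z k)) / lower_const
      + \<Phi> (\<lambda>k. v k - z k))"
    using d1 four_le_K by (smt (verit) mult_left_mono)
  thus ?thesis using lower_const_pos by (simp add: field_simps power2_eq_square)
qed

lemma hump_closure_bounded_below:
  assumes "z \<in> hump_closure"
  shows "lower_const / K^2 * \<Phi> z \<le> lorentz_modular w p (T z)"
proof -
  obtain v where z: "z \<in> X" and v: "\<forall>j. v j \<in> hump_span"
    and lim: "(\<lambda>j. \<Phi> (\<lambda>k. v j k - z k)) \<longlonglongrightarrow> 0" using assms unfolding hump_closure_def by blast
  obtain D where D: "\<forall>x\<in>X. lorentz_modular w p (T x) \<le> D * \<Phi> x" using modular_image_bound by blast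
  define R where "R = K^2 / lower_const * lorentz_modular w p (T z)"
  define \<beta> where "\<beta> = K^2 * D / lower_const + K"
  have "(\<lambda>j. R + \<beta> * \<Phi> (\<lambda>k. v j k - z k)) \<longlonglongrightarrow> R + \<beta> * 0"
    by (intro tendsto_add tendsto_mult tendsto_const lim)
  hence "\<Phi> z \<le> R"
    using modular_le_near_hump_span[OF z v[rule_format] D] unfolding R_def \<beta>_def
    by (intro LIMSEQ_le_const) auto
  thus ?thesis unfolding R_def using lower_const_pos four_le_K by (simp add: field_simps)
qed

lemma exists_subspace_bounded_below:
  "\<exists>Z. closed_subspace_of (\<lambda>x. \<Phi> x powr (1/p)) X Z \<and> infinite_dimensional Z \<and>
      (\<exists>c>0. \<forall>z\<in>Z. c * (\<Phi> z powr (1/p)) \<le> lorentz_norm w p (T z))"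
proof -
  have A: "closed_subspace_of (\<lambda>x. \<Phi> x powr (1/p)) X hump_closure"
    unfolding closed_subspace_of_def
      using hump_closure_subset lin_subspace_hump_closure norm_closed_hump_closure by blast
  have B: "infinite_dimensional hump_closure" by (rule infinite_dimensional_hump_closure)
  define c where "c = (lower_const / K^2) powr (1/p)"
  have c0: "0 < c" unfolding c_def using lower_const_pos four_le_K by simp
  have "\<forall>z\<in>hump_closure. c * (\<Phi> z powr (1/p)) \<le> lorentz_norm w p (T z)"
  proof
    fix z assume z: "z \<in> hump_closure"
    have zX: "z \<in> X" using z hump_closure_subset by auto
    show "c * (\<Phi> z powr (1/p)) \<le> lorentz_norm w p (T z)"
      unfolding c_def lorentz_norm_eq_modular
      using hump_closure_bounded_below[OF z] nonneg[of z] zX X_subset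
        modular_space.nonneg[OF target image_mem[OF zX]] lower_const_pos four_le_K p_pos
      by (intro mult_le_imp_root_le) auto
  qed
  hence "\<exists>c>0. \<forall>z\<in>hump_closure. c * (\<Phi> z powr (1/p)) \<le> lorentz_norm w p (T z)" using c0 by blast
  thus ?thesis using A B by blast
qed

end

lemma FSS_ops_subset_SS_ops: "FSS_ops NX NY X Y \<subseteq> SS_ops NX NY X Y"
proof
  fix T assume T: "T \<in> FSS_ops NX NY X Y"
  have "\<not> (closed_subspace_of NX X Z \<and> infinite_dimensional Z \<and> c > 0 \<and> (\<forall>z\<in>Z. c * NX z \<le> NY (T z)))"
    for Z c
  proof
    assume Z: "closed_subspace_of NX X Z \<and> infinite_dimensional Z \<and> c > 0
        \<and> (\<forall>z\<in>Z. c * NX z \<le> NY (T z))"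
    then obtain N where N: "\<forall>Z. Z \<subseteq> X \<and> lin_subspace Z \<and> dim_at_least Z N
        \<longrightarrow> (\<exists>z\<in>Z. NY (T z) < c * NX z)"
      using T unfolding FSS_ops_def by blast
    have "Z \<subseteq> X" "lin_subspace Z" "dim_at_least Z N"
      using Z by (auto simp: closed_subspace_of_def infinite_dimensional_def)
    thus False using N Z by fastforce
  qed
  thus "T \<in> SS_ops NX NY X Y" using T by (auto simp: FSS_ops_def SS_ops_def)
qed

lemma (in modular_space) SS_ops_subset_FSS_ops:
  assumes w: "lorentz_weight w" and X: "X \<subseteq> E" "lin_subspace X" and Y: "Y \<subseteq> lorentz_space w p"
  shows "SS_ops (\<lambda>x. \<Phi> x powr (1/p)) (lorentz_norm w p) X Y
    \<subseteq> FSS_ops (\<lambda>x. \<Phi> x powr (1/p)) (lorentz_norm w p) X Y"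
proof
  fix T assume T: "T \<in> SS_ops (\<lambda>x. \<Phi> x powr (1/p)) (lorentz_norm w p) X Y"
  show "T \<in> FSS_ops (\<lambda>x. \<Phi> x powr (1/p)) (lorentz_norm w p) X Y"
  proof (rule ccontr)
    assume "T \<notin> FSS_ops (\<lambda>x. \<Phi> x powr (1/p)) (lorentz_norm w p) X Y"
    then obtain \<epsilon> where "\<epsilon> > 0" and "\<And>N. \<exists>Z. Z \<subseteq> X \<and> lin_subspace Z \<and> dim_at_least Z N \<and>
        (\<forall>z\<in>Z. \<epsilon> * \<Phi> z powr (1/p) \<le> lorentz_norm w p (T z))"
      using T by (auto simp: FSS_ops_def SS_ops_def not_less)
    hence "non_fss_operator E \<Phi> p w X Y T \<epsilon>"
      using w X Y T by unfold_locales (auto simp: SS_ops_def)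
    from non_fss_operator.exists_subspace_bounded_below[OF this] T show False
      unfolding SS_ops_def by blast
  qed
qed

theorem theorem3p5:
  fixes w :: "nat \<Rightarrow> real" and p :: real
  assumes "1 \<le> p" and "lorentz_weight w"
  shows "(\<forall>X Y. closed_subspace_of (lorentz_norm w p) (lorentz_space w p) X \<longrightarrow>
                closed_subspace_of (lorentz_norm w p) (lorentz_space w p) Y \<longrightarrow>
                FSS_ops (lorentz_norm w p) (lorentz_norm w p) X Y
                  = SS_ops (lorentz_norm w p) (lorentz_norm w p) X Y)
       \<and> FSS_ops (lp_norm p) (lorentz_norm w p) (lp_space p) (lorentz_space w p)
           = SS_ops (lp_norm p) (lorentz_norm w p) (lp_space p) (lorentz_space w p)
       \<and> FSS_ops (lorentz_norm w p) (lorentz_norm w p) (lorentz_space w p) (lorentz_space w p)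
           = SS_ops (lorentz_norm w p) (lorentz_norm w p) (lorentz_space w p) (lorentz_space w p)"
proof -
  interpret lorentz: modular_space "lorentz_space w p" "lorentz_modular w p" p
    by (rule modular_space_lorentz[OF assms(2,1)])
  interpret lp: modular_space "lp_space p" "lp_modular p" p
    by (rule modular_space_lp[OF assms(1)])
  note lorentz_SS = lorentz.SS_ops_subset_FSS_ops[OF assms(2), folded lorentz_norm_eq_modular]
  note lp_SS = lp.SS_ops_subset_FSS_ops[OF assms(2), folded lp_norm_eq_modular]
  show ?thesis
  proof (intro conjI allI impI)
    fix X Y
    assume "closed_subspace_of (lorentz_norm w p) (lorentz_space w p) X"
      "closed_subspace_of (lorentz_norm w p) (lorentz_space w p) Y"
    thus "FSS_ops (lorentz_norm w p) (lorentz_norm w p) X Y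
        = SS_ops (lorentz_norm w p) (lorentz_norm w p) X Y"
      by (intro subset_antisym FSS_ops_subset_SS_ops lorentz_SS) (auto simp: closed_subspace_of_def)
  qed (intro subset_antisym FSS_ops_subset_SS_ops lp_SS lorentz_SS order_refl
      lp.lin_subspace_carrier lorentz.lin_subspace_carrier)+
qed

end
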